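(* Let $\mathcal{M}$ be a monotone gridding matrix such that the cell graph $G_\mathcal{M}$ contains a cycle. Then $\mathrm{Grid}(\mathcal{M})$ has unbounded grid-width, i.e., for every $w$ there is $\pi\in\mathrm{Grid}(\mathcal{M})$ of grid-width greater than $w$.
   Context: $\mathrm{Inc}$ and $\mathrm{Dec}$ denote the classes of increasing and decreasing permutations. A monotone gridding matrix $\mathcal{M}$ is a $k\times\ell$ matrix with entries in $\{\mathrm{Inc},\mathrm{Dec},\emptyset\}$. An $\mathcal{M}$-gridding of a permutation $\pi$ of length $n$ (identified with its diagram $\{(i,\pi_i)\}$) consists of possibly empty disjoint integer intervals $I_1<\dots<I_k$ and $J_1<\dots<J_\ell$, each family with union $[n]$, such that the points in each cell $I_i\times J_j$ form a pattern in $\mathcal{M}_{i,j}$; $\mathrm{Grid}(\mathcal{M})$ is the class of permutations having an $\mathcal{M}$-gridding. The cell graph $G_\mathcal{M}$ has as vertices the cells with infinite entries, adjacent when they share a row or column and all cells strictly between them are finite or empty. The intervalicity of $A\subseteq[n]$ is the least number of disjoint integer intervals with union $A$; the grid-complexity of a point set is the maximum of the intervalicities of its two axis projections. A grid tree of $\pi$ is a rooted binary tree whose leaves are labeled bijectively by the points of $\pi$; its grid-width is the maximum over vertices $v$ of the grid-complexity of the leaf labels below $v$; the grid-width of $\pi$ is the minimum grid-width of a grid tree of $\pi$. *)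

theory Defs
  imports Main
begin

text \<open>Entries of a monotone gridding matrix: the classes Inc, Dec and the empty class.\<close>
datatype cell = Inc | Dec | Emp

fun cell_ok :: "cell \<Rightarrow> (nat \<times> nat) set \<Rightarrow> bool" where
  "cell_ok Inc P = (\<forall>(a,b)\<in>P. \<forall>(c,d)\<in>P. a < c \<longrightarrow> b < d)"
| "cell_ok Dec P = (\<forall>(a,b)\<in>P. \<forall>(c,d)\<in>P. a < c \<longrightarrow> b > d)"
| "cell_ok Emp P = (P = {})"

definition is_perm :: "nat \<Rightarrow> (nat \<Rightarrow> nat) \<Rightarrow> bool" where
  "is_perm n \<pi> \<longleftrightarrow> bij_betw \<pi> {1..n} {1..n}"

definition diagram :: "nat \<Rightarrow> (nat \<Rightarrow> nat) \<Rightarrow> (nat \<times> nat) set" where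
  "diagram n \<pi> = {(i, \<pi> i) | i. i \<in> {1..n}}"

text \<open>Integer intervals (possibly empty).\<close>
definition int_interval :: "nat set \<Rightarrow> bool" where
  "int_interval S \<longleftrightarrow> (\<exists>a b. S = {a..b})"

definition interval_partition :: "nat \<Rightarrow> nat \<Rightarrow> (nat \<Rightarrow> nat set) \<Rightarrow> bool" where
  "interval_partition k n I \<longleftrightarrow>
     (\<forall>i\<in>{1..k}. int_interval (I i)) \<and>
     (\<forall>i i'. 1 \<le> i \<and> i < i' \<and> i' \<le> k \<longrightarrow> (\<forall>x\<in>I i. \<forall>y\<in>I i'. x < y)) \<and>
     (\<Union>i\<in>{1..k}. I i) = {1..n}"

text \<open>M is a k x l matrix (entries M i j, 1 \<le> i \<le> k, 1 \<le> j \<le> l); an M-gridding of \<pi>.\<close>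
definition is_gridding :: "nat \<Rightarrow> nat \<Rightarrow> (nat \<Rightarrow> nat \<Rightarrow> cell) \<Rightarrow> nat \<Rightarrow> (nat \<Rightarrow> nat)
    \<Rightarrow> (nat \<Rightarrow> nat set) \<Rightarrow> (nat \<Rightarrow> nat set) \<Rightarrow> bool" where
  "is_gridding k l M n \<pi> I J \<longleftrightarrow>
     interval_partition k n I \<and> interval_partition l n J \<and>
     (\<forall>i\<in>{1..k}. \<forall>j\<in>{1..l}. cell_ok (M i j) (diagram n \<pi> \<inter> (I i \<times> J j)))"

definition in_Grid :: "nat \<Rightarrow> nat \<Rightarrow> (nat \<Rightarrow> nat \<Rightarrow> cell) \<Rightarrow> nat \<Rightarrow> (nat \<Rightarrow> nat) \<Rightarrow> bool" where
  "in_Grid k l M n \<pi> \<longleftrightarrow> is_perm n \<pi> \<and> (\<exists>I J. is_gridding k l M n \<pi> I J)"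

text \<open>Cell graph: vertices are cells with infinite entries (Inc/Dec).\<close>
definition cg_vertex :: "nat \<Rightarrow> nat \<Rightarrow> (nat \<Rightarrow> nat \<Rightarrow> cell) \<Rightarrow> nat \<times> nat \<Rightarrow> bool" where
  "cg_vertex k l M c \<longleftrightarrow> fst c \<in> {1..k} \<and> snd c \<in> {1..l} \<and> M (fst c) (snd c) \<noteq> Emp"

definition cg_adj :: "nat \<Rightarrow> nat \<Rightarrow> (nat \<Rightarrow> nat \<Rightarrow> cell) \<Rightarrow> nat \<times> nat \<Rightarrow> nat \<times> nat \<Rightarrow> bool" where
  "cg_adj k l M c d \<longleftrightarrow>
     cg_vertex k l M c \<and> cg_vertex k l M d \<and> c \<noteq> d \<and>
     ((fst c = fst d \<and> (\<forall>j. min (snd c) (snd d) < j \<and> j < max (snd c) (snd d) \<longrightarrow> M (fst c) j = Emp)) \<or>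
      (snd c = snd d \<and> (\<forall>i. min (fst c) (fst d) < i \<and> i < max (fst c) (fst d) \<longrightarrow> M i (snd c) = Emp)))"

definition cg_has_cycle :: "nat \<Rightarrow> nat \<Rightarrow> (nat \<Rightarrow> nat \<Rightarrow> cell) \<Rightarrow> bool" where
  "cg_has_cycle k l M \<longleftrightarrow>
     (\<exists>cs. length cs \<ge> 3 \<and> distinct cs \<and>
        (\<forall>t < length cs. cg_adj k l M (cs ! t) (cs ! ((t + 1) mod length cs))))"

definition intervalicity :: "nat set \<Rightarrow> nat" where
  "intervalicity A = (LEAST m. \<exists>F. finite F \<and> card F = m \<and>
       (\<forall>S\<in>F. \<exists>a b. a \<le> b \<and> S = {a..b}) \<and>
       (\<forall>S\<in>F. \<forall>T\<in>F. S \<noteq> T \<longrightarrow> S \<inter> T = {}) \<and> \<Union>F = A)"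

definition grid_complexity :: "(nat \<times> nat) set \<Rightarrow> nat" where
  "grid_complexity P = max (intervalicity (fst ` P)) (intervalicity (snd ` P))"

datatype 'a btree = Leaf 'a | Node "'a btree" "'a btree"

fun leaves :: "'a btree \<Rightarrow> 'a list" where
  "leaves (Leaf x) = [x]"
| "leaves (Node l r) = leaves l @ leaves r"

definition is_grid_tree :: "(nat \<times> nat) set \<Rightarrow> (nat \<times> nat) btree \<Rightarrow> bool" where
  "is_grid_tree P T \<longleftrightarrow> distinct (leaves T) \<and> set (leaves T) = P"

fun tree_grid_width :: "(nat \<times> nat) btree \<Rightarrow> nat" where
  "tree_grid_width (Leaf x) = grid_complexity {x}"
| "tree_grid_width (Node l r) =
     max (grid_complexity (set (leaves (Node l r)))) (max (tree_grid_width l) (tree_grid_width r))"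

definition grid_width :: "nat \<Rightarrow> (nat \<Rightarrow> nat) \<Rightarrow> nat" where
  "grid_width n \<pi> = (LEAST w. \<exists>T. is_grid_tree (diagram n \<pi>) T \<and> tree_grid_width T = w)"

end

theory Submission
  imports Defs
begin

text \<open>Walking around a cycle of the cell graph and skipping the cells where it runs straight
  gives cells \<open>T 0, \<dots>, T (2 * r - 1)\<close> in which consecutive cells alternately share a column
  and a row. Fill every \<open>T t\<close> with \<open>2 * half\<close> points, monotone as the matrix demands, and
  interleave the points of cells sharing a line so that the \<open>i\<close>-th point of \<open>T t\<close> is adjacent
  (next in position or next in value) to the \<open>i\<close>-th point of \<open>T (t + 1)\<close>, up to the reflection
  \<open>i \<mapsto> 2 * half + 1 - i\<close> forced by decreasing cells, and up to a shift by \<open>s\<close> at the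
  turn from \<open>T (2 * r - 1)\<close> back to \<open>T 0\<close>. Following the adjacencies around the cycle many
  times yields \<open>P = spirals\<close> disjoint spiral paths, each crossing each of \<open>P\<close> disjoint
  short paths (rungs) inside \<open>T 0\<close> and \<open>T 1\<close>: a \<open>P \<times> P\<close> grid of adjacencies.

  In any grid tree some subtree holds between a third and two thirds of the spiral points; then
  a third of the spirals or all rungs are split by its leaves \<open>S\<close>, giving \<open>P / 3\<close> adjacent
  pairs separated by \<open>S\<close>. Each such pair marks an end of one of the intervals forming a
  projection of \<open>S\<close>, so the grid-complexity of \<open>S\<close> is at least \<open>P / 12\<close>.\<close>

section \<open>Intervalicity\<close>

lemma intervalicity_witness:
  assumes "finite X"
  obtains F where "finite F" "card F = intervalicity X"
    "\<forall>S\<in>F. \<exists>a b. a \<le> b \<and> S = {a..b}" "\<Union>F = X"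
proof -
  let ?P = "\<lambda>m. \<exists>F. finite F \<and> card F = m \<and>
       (\<forall>S\<in>F. \<exists>a b. a \<le> b \<and> S = {a..b}) \<and>
       (\<forall>S\<in>F. \<forall>T\<in>F. S \<noteq> T \<longrightarrow> S \<inter> T = {}) \<and> \<Union>F = X"
  have "?P (card ((\<lambda>a. {a..a}) ` X))"
    using assms by (intro exI[of _ "(\<lambda>a. {a..a}) ` X"]) (auto simp del: atLeastAtMost_singleton)
  hence "?P (LEAST m. ?P m)" by (rule LeastI)
  thus thesis using that unfolding intervalicity_def by blast
qed

lemma finite_boundary:
  assumes "finite X"
  shows "finite {u. (u \<in> X) \<noteq> (Suc u \<in> X)}"
proof (rule finite_subset)
  show "{u. (u \<in> X) \<noteq> (Suc u \<in> X)} \<subseteq> X \<union> (\<lambda>v. v - 1) ` X"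
    by (auto intro: rev_image_eqI)
qed (use assms in simp)

text \<open>Every boundary point is the right end of an interval or lies just left of one.\<close>
lemma card_boundary_le_intervalicity:
  assumes "finite X"
  shows "card {u. (u \<in> X) \<noteq> (Suc u \<in> X)} \<le> 2 * intervalicity X"
proof -
  obtain F where F: "finite F" "card F = intervalicity X"
    "\<forall>S\<in>F. \<exists>a b. a \<le> b \<and> S = {a..b}" "\<Union>F = X"
    using intervalicity_witness[OF assms] by blast
  have "{u. (u \<in> X) \<noteq> (Suc u \<in> X)} \<subseteq> Max ` F \<union> (\<lambda>S. Min S - 1) ` F"
  proof
    fix u assume u: "u \<in> {u. (u \<in> X) \<noteq> (Suc u \<in> X)}"
    show "u \<in> Max ` F \<union> (\<lambda>S. Min S - 1) ` F"
    proof (cases "u \<in> X")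
      case True
      then obtain S where S: "S \<in> F" "u \<in> S" using F(4) by blast
      then obtain a b where "a \<le> b" "S = {a..b}" using F(3) by blast
      moreover have "Suc u \<notin> S" using u True S F(4) by blast
      ultimately have "u = Max S" using S(2) by (auto intro: Max_eqI[symmetric])
      thus ?thesis using S(1) by blast
    next
      case False
      then obtain S where S: "S \<in> F" "Suc u \<in> S" using u F(4) by blast
      then obtain a b where "a \<le> b" "S = {a..b}" using F(3) by blast
      moreover have "u \<notin> S" using False S F(4) by blast
      ultimately have "Suc u = Min S" using S(2) by (auto intro: Min_eqI[symmetric])
      hence "u = Min S - 1" by simp
      thus ?thesis using S(1) by blast
    qed
  qed
  hence "card {u. (u \<in> X) \<noteq> (Suc u \<in> X)} \<le> card (Max ` F \<union> (\<lambda>S. Min S - 1) ` F)"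
    using F(1) by (intro card_mono) auto
  also have "\<dots> \<le> card (Max ` F) + card ((\<lambda>S. Min S - 1) ` F)" by (rule card_Un_le)
  also have "\<dots> \<le> card F + card F" using card_image_le[OF F(1)] by (intro add_mono)
  finally show ?thesis using F(2) by simp
qed

lemma card_split_successor_pairs_le:
  assumes "finite A" "inj_on f A" "S \<subseteq> A"
  shows "card {(a, b) \<in> A \<times> A. f b = Suc (f a) \<and> (a \<in> S) \<noteq> (b \<in> S)}
           \<le> 2 * intervalicity (f ` S)"
proof -
  let ?E = "{(a, b) \<in> A \<times> A. f b = Suc (f a) \<and> (a \<in> S) \<noteq> (b \<in> S)}"
  have mem: "f a \<in> f ` S \<longleftrightarrow> a \<in> S" if "a \<in> A" for a
    using assms(2,3) that by (auto dest: inj_onD)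
  have "inj_on (\<lambda>e. f (fst e)) ?E"
  proof (rule inj_onI)
    fix e e' assume e: "e \<in> ?E" "e' \<in> ?E" "f (fst e) = f (fst e')"
    hence "fst e = fst e'" "f (snd e) = f (snd e')"
      using inj_onD[OF assms(2)] by auto
    thus "e = e'" using e inj_onD[OF assms(2)] by (auto simp: prod_eq_iff)
  qed
  moreover have "(\<lambda>e. f (fst e)) ` ?E \<subseteq> {u. (u \<in> f ` S) \<noteq> (Suc u \<in> f ` S)}"
  proof
    fix u assume "u \<in> (\<lambda>e. f (fst e)) ` ?E"
    then obtain e where e: "e \<in> ?E" "u = f (fst e)" by blast
    hence "fst e \<in> A" "snd e \<in> A" "f (snd e) = Suc u" "(fst e \<in> S) \<noteq> (snd e \<in> S)"
      by auto
    thus "u \<in> {u. (u \<in> f ` S) \<noteq> (Suc u \<in> f ` S)}"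
      using mem[of "fst e"] mem[of "snd e"] e(2) by auto
  qed
  moreover have "finite {u. (u \<in> f ` S) \<noteq> (Suc u \<in> f ` S)}"
    using assms by (intro finite_boundary) (auto intro: finite_subset)
  ultimately have "card ?E \<le> card {u. (u \<in> f ` S) \<noteq> (Suc u \<in> f ` S)}"
    by (rule card_inj_on_le)
  also have "\<dots> \<le> 2 * intervalicity (f ` S)"
    using assms by (intro card_boundary_le_intervalicity) (auto intro: finite_subset)
  finally show ?thesis .
qed

section \<open>Grid trees\<close>

lemma grid_complexity_le_tree_grid_width:
  "grid_complexity (set (leaves T)) \<le> tree_grid_width T"
  by (cases T) auto

text \<open>The usual balanced-separator argument: descend into the heavier child while the
  subtree holds more than two thirds of \<open>U\<close>.\<close>
lemma balanced_subtree:
  assumes "finite U" "3 \<le> 2 * card U" "card U < 3 * card (set (leaves T) \<inter> U)"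
  obtains T' where "card U < 3 * card (set (leaves T') \<inter> U)"
    "3 * card (set (leaves T') \<inter> U) \<le> 2 * card U"
    "grid_complexity (set (leaves T')) \<le> tree_grid_width T"
    "set (leaves T') \<subseteq> set (leaves T)"
  using assms(3)
proof (induction T arbitrary: thesis)
  case (Leaf x)
  have "card (set (leaves (Leaf x)) \<inter> U) \<le> 1"
    by (simp add: card_le_Suc0_iff_eq)
  thus ?case using Leaf.prems(1)[of "Leaf x"] Leaf.prems(2) assms(2) by simp
next
  case (Node T1 T2)
  let ?w = "\<lambda>T. card (set (leaves T) \<inter> U)"
  show ?case
  proof (cases "3 * ?w (Node T1 T2) \<le> 2 * card U")
    case True
    thus ?thesis using Node.prems(1)[of "Node T1 T2"] Node.prems(2)
      grid_complexity_le_tree_grid_width[of "Node T1 T2"] by simp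
  next
    case False
    have "set (leaves (Node T1 T2)) \<inter> U = (set (leaves T1) \<inter> U) \<union> (set (leaves T2) \<inter> U)"
      by auto
    hence "?w (Node T1 T2) \<le> ?w T1 + ?w T2" by (metis card_Un_le)
    hence "card U < 3 * ?w T1 \<or> card U < 3 * ?w T2" using False by linarith
    thus ?thesis
    proof
      assume "card U < 3 * ?w T1"
      then obtain T' where "card U < 3 * ?w T'" "3 * ?w T' \<le> 2 * card U"
        "grid_complexity (set (leaves T')) \<le> tree_grid_width T1" "set (leaves T') \<subseteq> set (leaves T1)"
        using Node.IH(1) by blast
      thus ?thesis by (intro Node.prems(1)[of T']) (auto simp: le_max_iff_disj)
    next
      assume "card U < 3 * ?w T2"
      then obtain T' where "card U < 3 * ?w T'" "3 * ?w T' \<le> 2 * card U"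
        "grid_complexity (set (leaves T')) \<le> tree_grid_width T2" "set (leaves T') \<subseteq> set (leaves T2)"
        using Node.IH(2) by blast
      thus ?thesis by (intro Node.prems(1)[of T']) (auto simp: le_max_iff_disj)
    qed
  qed
qed

lemma ex_btree_leaves: "xs \<noteq> [] \<Longrightarrow> \<exists>T. leaves T = xs"
proof (induction xs)
  case (Cons x xs)
  show ?case
  proof (cases "xs = []")
    case True thus ?thesis by (intro exI[of _ "Leaf x"]) simp
  next
    case False
    then obtain T where "leaves T = xs" using Cons.IH by blast
    thus ?thesis by (intro exI[of _ "Node (Leaf x) T"]) simp
  qed
qed simp

lemma grid_width_greaterI:
  assumes "finite (diagram n \<pi>)" "diagram n \<pi> \<noteq> {}"
    and "\<And>T. is_grid_tree (diagram n \<pi>) T \<Longrightarrow> w < tree_grid_width T"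
  shows "w < grid_width n \<pi>"
proof -
  obtain xs where xs: "set xs = diagram n \<pi>" "distinct xs"
    using assms(1) finite_distinct_list by blast
  moreover have "xs \<noteq> []" using xs(1) assms(2) by auto
  ultimately obtain T where "leaves T = xs" using ex_btree_leaves by blast
  hence "\<exists>w'. \<exists>T. is_grid_tree (diagram n \<pi>) T \<and> tree_grid_width T = w'"
    using xs unfolding is_grid_tree_def by auto
  hence "\<exists>T. is_grid_tree (diagram n \<pi>) T \<and> tree_grid_width T = grid_width n \<pi>"
    unfolding grid_width_def by (rule LeastI_ex)
  then obtain T where "is_grid_tree (diagram n \<pi>) T" "tree_grid_width T = grid_width n \<pi>"
    by blast
  thus ?thesis using assms(3) by metis
qed

section \<open>Splitting families of paths\<close>

lemma exists_crossing_step: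
  assumes "i < L" "j < L" "f i \<in> S" "f j \<notin> S"
  obtains u where "Suc u < L" "(f u \<in> S) \<noteq> (f (Suc u) \<in> S)"
proof -
  have "\<not> (\<forall>u. Suc u < L \<longrightarrow> (f u \<in> S) = (f (Suc u) \<in> S))"
  proof
    assume no_change: "\<forall>u. Suc u < L \<longrightarrow> (f u \<in> S) = (f (Suc u) \<in> S)"
    have same: "(f u \<in> S) = (f 0 \<in> S)" if "u < L" for u
      using that no_change by (induction u) auto
    show False using same[OF assms(1)] same[OF assms(2)] assms(3,4) by simp
  qed
  thus thesis using that by auto
qed

lemma card_le_card_of_disjoint_hits:
  assumes "finite E" "\<forall>x\<in>X. \<exists>e\<in>E. h e \<in> R x" "\<forall>x\<in>X. \<forall>y\<in>X. x \<noteq> y \<longrightarrow> R x \<inter> R y = {}"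
  shows "card X \<le> card E"
proof -
  define g where "g x = (SOME e. e \<in> E \<and> h e \<in> R x)" for x
  have g: "g x \<in> E \<and> h (g x) \<in> R x" if "x \<in> X" for x
    unfolding g_def by (rule someI_ex) (use assms(2) that in blast)
  have "inj_on g X"
  proof (rule inj_onI)
    fix x y assume xy: "x \<in> X" "y \<in> X" "g x = g y"
    hence "R x \<inter> R y \<noteq> {}" using g[OF xy(1)] g[OF xy(2)] by auto
    thus "x = y" using assms(3) xy(1,2) by blast
  qed
  moreover have "g ` X \<subseteq> E" using g by auto
  ultimately show ?thesis using assms(1) by (rule card_inj_on_le)
qed

lemma card_inter_le_split_rows:
  assumes "finite A" "\<forall>x\<in>A. finite (R x)" "\<forall>x\<in>A. card (R x) = L"
    and "\<forall>x\<in>A. R x \<inter> Y \<noteq> {} \<longrightarrow> R x - Y \<noteq> {}"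
  shows "card ((\<Union>x\<in>A. R x) \<inter> Y) \<le> card {x\<in>A. R x \<inter> Y \<noteq> {} \<and> R x - Y \<noteq> {}} * L"
proof -
  let ?split = "{x\<in>A. R x \<inter> Y \<noteq> {} \<and> R x - Y \<noteq> {}}"
  have "(\<Union>x\<in>A. R x) \<inter> Y \<subseteq> (\<Union>x\<in>?split. R x)" using assms(4) by blast
  hence "card ((\<Union>x\<in>A. R x) \<inter> Y) \<le> card (\<Union>x\<in>?split. R x)"
    using assms(1,2) by (intro card_mono) auto
  also have "\<dots> \<le> card ?split * L" using card_UN_le[of ?split R] assms(1,3) by simp
  finally show ?thesis .
qed

text \<open>A column that misses \<open>S\<close> (or lies inside \<open>S\<close>) meets every row outside (inside) \<open>S\<close>, so
  every row meeting (leaving) \<open>S\<close> is split; if \<open>S\<close> holds a middle third of the rows' union,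
  this makes a third of the rows split.\<close>
lemma rows_or_columns_split:
  fixes R C :: "nat \<Rightarrow> 'a set"
  assumes "finite A" "\<forall>x\<in>A. finite (R x)" "\<forall>x\<in>A. card (R x) = L"
    and "\<forall>x\<in>A. \<forall>y\<in>A. x \<noteq> y \<longrightarrow> R x \<inter> R y = {}"
    and "\<forall>x\<in>A. \<forall>q\<in>B. R x \<inter> C q \<noteq> {}"
    and U: "U = (\<Union>x\<in>A. R x)"
    and "card U < 3 * card (U \<inter> S)" "3 * card (U \<inter> S) \<le> 2 * card U"
  shows "card A \<le> 3 * card {x\<in>A. R x \<inter> S \<noteq> {} \<and> R x - S \<noteq> {}}
    \<or> (\<forall>q\<in>B. C q \<inter> S \<noteq> {} \<and> C q - S \<noteq> {})"
proof (rule disjCI)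
  let ?split = "{x\<in>A. R x \<inter> S \<noteq> {} \<and> R x - S \<noteq> {}}"
  assume "\<not> (\<forall>q\<in>B. C q \<inter> S \<noteq> {} \<and> C q - S \<noteq> {})"
  then obtain q where q: "q \<in> B" "C q \<inter> S = {} \<or> C q - S = {}" by blast
  have cardU: "card U = card A * L"
    unfolding U using assms(1-4) by (subst card_UN_disjoint) auto
  have "finite U" using assms(1,2) unfolding U by simp
  hence "card U = card (U \<inter> S) + card (U - S)" by (metis card_Int_Diff)
  moreover have "card (U \<inter> S) \<le> card ?split * L" if "C q \<inter> S = {}"
    using card_inter_le_split_rows[OF assms(1-3), of S] assms(5) q(1) that unfolding U by blast
  moreover have "card (U - S) \<le> card ?split * L" if "C q - S = {}"
  proof -
    have "\<forall>x\<in>A. R x \<inter> - S \<noteq> {} \<longrightarrow> R x - - S \<noteq> {}" using assms(5) q(1) that by blast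
    hence "card (U \<inter> - S) \<le> card {x\<in>A. R x \<inter> - S \<noteq> {} \<and> R x - - S \<noteq> {}} * L"
      unfolding U by (rule card_inter_le_split_rows[OF assms(1-3)])
    moreover have "{x\<in>A. R x \<inter> - S \<noteq> {} \<and> R x - - S \<noteq> {}} = ?split" by blast
    ultimately show ?thesis by (simp add: Diff_eq)
  qed
  ultimately have "card A * L \<le> 3 * card ?split * L" using q(2) assms(7,8) cardU by force
  moreover have "0 < L" using assms(7,8) cardU by (cases L) auto
  ultimately show "card A \<le> 3 * card ?split" by simp
qed

section \<open>Ranks\<close>

definition rank :: "('a \<Rightarrow> nat) \<Rightarrow> 'a set \<Rightarrow> 'a \<Rightarrow> nat" where
  "rank f A p = Suc (card {q\<in>A. f q < f p})"

context
  fixes f :: "'a \<Rightarrow> nat" and A :: "'a set"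
  assumes finite: "finite A" and inj: "inj_on f A"
begin

lemma rank_less_iff: "p \<in> A \<Longrightarrow> q \<in> A \<Longrightarrow> rank f A p < rank f A q \<longleftrightarrow> f p < f q"
proof -
  have mono: "rank f A p < rank f A q" if "p \<in> A" "q \<in> A" "f p < f q" for p q
  proof -
    have "{q'\<in>A. f q' < f p} \<subset> {q'\<in>A. f q' < f q}" using that by auto
    thus ?thesis unfolding rank_def using finite by (simp add: psubset_card_mono)
  qed
  assume pq: "p \<in> A" "q \<in> A"
  show ?thesis
  proof (cases "f p < f q")
    case False
    hence "f q < f p \<or> f q = f p" by auto
    hence "f q < f p \<or> p = q" using inj pq by (auto dest: inj_onD)
    thus ?thesis using mono[OF pq(2,1)] False by auto
  qed (use mono[OF pq] in simp)
qed

lemma bij_betw_rank: "bij_betw (rank f A) A {1..card A}"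
proof -
  have "inj_on (rank f A) A"
  proof (rule inj_onI)
    fix p q assume pq: "p \<in> A" "q \<in> A" "rank f A p = rank f A q"
    hence "f p = f q" using rank_less_iff[OF pq(1,2)] rank_less_iff[OF pq(2,1)] by simp
    thus "p = q" using inj pq by (auto dest: inj_onD)
  qed
  moreover have "rank f A ` A \<subseteq> {1..card A}"
  proof
    fix m assume "m \<in> rank f A ` A"
    then obtain p where "p \<in> A" "m = rank f A p" by blast
    moreover have "{q\<in>A. f q < f p} \<subset> A" using \<open>p \<in> A\<close> by auto
    ultimately show "m \<in> {1..card A}"
      unfolding rank_def using finite by (simp add: psubset_card_mono Suc_leI)
  qed
  ultimately show ?thesis
    unfolding bij_betw_def by (simp add: card_image card_subset_eq)
qed

lemma rank_Suc: "p \<in> A \<Longrightarrow> q \<in> A \<Longrightarrow> f q = Suc (f p) \<Longrightarrow> rank f A q = Suc (rank f A p)"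
proof -
  assume pq: "p \<in> A" "q \<in> A" "f q = Suc (f p)"
  hence "{q'\<in>A. f q' < f q} = insert p {q'\<in>A. f q' < f p}"
    using inj by (auto dest: inj_onD simp: less_Suc_eq)
  thus ?thesis unfolding rank_def using finite by simp
qed

lemma rank_image_interval:
  "rank f A ` {p\<in>A. a \<le> f p \<and> f p < b} = {Suc (card {q\<in>A. f q < a}) .. card {q\<in>A. f q < b}}"
    (is "?L = ?R")
proof
  show "?L \<subseteq> ?R"
  proof
    fix m assume "m \<in> ?L"
    then obtain p where p: "p \<in> A" "a \<le> f p" "f p < b" "m = rank f A p" by auto
    have "card {q\<in>A. f q < a} \<le> card {q\<in>A. f q < f p}"
      using p finite by (intro card_mono) auto
    moreover have "card (insert p {q\<in>A. f q < f p}) \<le> card {q\<in>A. f q < b}"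
      using p finite by (intro card_mono) auto
    ultimately show "m \<in> ?R" using p finite unfolding rank_def by simp
  qed
next
  show "?R \<subseteq> ?L"
  proof
    fix m assume m: "m \<in> ?R"
    have "card {q\<in>A. f q < b} \<le> card A" using finite by (intro card_mono) auto
    hence "m \<in> rank f A ` A" using m bij_betw_rank unfolding bij_betw_def by auto
    then obtain p where p: "p \<in> A" "m = rank f A p" by blast
    have "a \<le> f p"
    proof (rule ccontr)
      assume "\<not> a \<le> f p"
      hence "card (insert p {q\<in>A. f q < f p}) \<le> card {q\<in>A. f q < a}"
        using p finite by (intro card_mono) auto
      thus False using m p finite unfolding rank_def by simp
    qed
    moreover have "f p < b"
    proof (rule ccontr)
      assume "\<not> f p < b"
      hence "card {q\<in>A. f q < b} \<le> card {q\<in>A. f q < f p}"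
        using finite by (intro card_mono) auto
      thus False using m p unfolding rank_def by simp
    qed
    ultimately show "m \<in> ?L" using p by auto
  qed
qed

lemma interval_partition_rank_blocks:
  assumes "0 < B" "\<And>p. p \<in> A \<Longrightarrow> f p div B \<in> {1..k}"
  shows "interval_partition k (card A) (\<lambda>c. rank f A ` {p\<in>A. f p div B = c})"
  unfolding interval_partition_def
proof (intro conjI ballI allI impI)
  fix c
  have "n div B = c \<longleftrightarrow> c * B \<le> n \<and> n < Suc c * B" for n
    using assms(1) by (meson div_less_iff_less_mult div_times_less_eq_dividend le_less_Suc_eq
      less_eq_div_iff_mult_less_eq)
  hence "{p\<in>A. f p div B = c} = {p\<in>A. c * B \<le> f p \<and> f p < Suc c * B}" by simp
  thus "int_interval (rank f A ` {p\<in>A. f p div B = c})"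
    unfolding int_interval_def by (simp only: rank_image_interval) blast
next
  fix c c' x y
  assume c: "1 \<le> c \<and> c < c' \<and> c' \<le> k"
    and "x \<in> rank f A ` {p\<in>A. f p div B = c}" "y \<in> rank f A ` {p\<in>A. f p div B = c'}"
  then obtain p q where "p \<in> A" "q \<in> A" "x = rank f A p" "y = rank f A q"
    "f p div B < f q div B" by auto
  moreover have "f p < f q" using \<open>f p div B < f q div B\<close> by (metis div_le_mono not_less)
  ultimately show "x < y" using rank_less_iff by simp
next
  have "(\<Union>c\<in>{1..k}. {p\<in>A. f p div B = c}) = A" using assms(2) by auto
  hence "(\<Union>c\<in>{1..k}. rank f A ` {p\<in>A. f p div B = c}) = rank f A ` A"
    by (simp add: image_UN[symmetric])
  thus "(\<Union>c\<in>{1..k}. rank f A ` {p\<in>A. f p div B = c}) = {1..card A}"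
    using bij_betw_rank unfolding bij_betw_def by simp
qed

end

section \<open>Cycles of turns in the cell graph\<close>

definition same_line :: "nat \<times> nat \<Rightarrow> nat \<times> nat \<Rightarrow> bool" where
  "same_line a b \<longleftrightarrow> fst a = fst b \<or> snd a = snd b"

definition cyc_next :: "'a list \<Rightarrow> nat \<Rightarrow> 'a" where
  "cyc_next xs t = xs ! (Suc t mod length xs)"

definition column_step :: "(nat \<times> nat) list \<Rightarrow> nat \<Rightarrow> bool" where
  "column_step xs t \<longleftrightarrow> fst (xs ! t) = fst (cyc_next xs t)"

definition turning_cycle :: "nat \<Rightarrow> nat \<Rightarrow> (nat \<Rightarrow> nat \<Rightarrow> cell) \<Rightarrow> (nat \<times> nat) list \<Rightarrow> bool" where
  "turning_cycle k l M xs \<longleftrightarrow> 3 \<le> length xs \<and> distinct xs \<and> (\<forall>x\<in>set xs. cg_vertex k l M x) \<and>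
     (\<forall>t<length xs. same_line (xs ! t) (cyc_next xs t)) \<and>
     (\<exists>t<length xs. column_step xs t) \<and> (\<exists>t<length xs. \<not> column_step xs t)"

definition alternating :: "(nat \<times> nat) list \<Rightarrow> bool" where
  "alternating xs \<longleftrightarrow> (\<forall>t<length xs. column_step xs t \<noteq> column_step xs (Suc t mod length xs))"

definition turn_cycle :: "nat \<Rightarrow> nat \<Rightarrow> (nat \<Rightarrow> nat \<Rightarrow> cell) \<Rightarrow> nat \<Rightarrow> (nat \<Rightarrow> nat \<times> nat) \<Rightarrow> bool"
  where
  "turn_cycle k l M r T \<longleftrightarrow> 1 \<le> r \<and> (\<forall>t<2*r. cg_vertex k l M (T t)) \<and> inj_on T {..<2*r} \<and>
     (\<forall>j<r. fst (T (2*j)) = fst (T (2*j+1))) \<and>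
     (\<forall>j<r. snd (T (2*j+1)) = snd (T ((2*j+2) mod (2*r))))"

lemma ex_less_mod_shift:
  assumes "0 < (L::nat)"
  shows "(\<exists>t<L. P ((n + t) mod L)) \<longleftrightarrow> (\<exists>t<L. P t)"
proof
  assume "\<exists>t<L. P t"
  then obtain t where "t < L" "P t" by blast
  moreover have "(n + (L - n mod L + t) mod L) mod L = t"
  proof -
    have "(n + (L - n mod L + t) mod L) mod L = (n mod L + (L - n mod L + t)) mod L"
      by (simp add: mod_add_left_eq mod_add_right_eq)
    also have "n mod L + (L - n mod L + t) = L + t"
      using mod_less_divisor[OF assms, of n] by arith
    finally show ?thesis using \<open>t < L\<close> by simp
  qed
  ultimately show "\<exists>t<L. P ((n + t) mod L)" using assms by (intro exI[of _ "(L - n mod L + t) mod L"]) auto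
next
  assume "\<exists>t<L. P ((n + t) mod L)"
  thus "\<exists>t<L. P t" using assms by (meson mod_less_divisor)
qed

lemma cyc_next_rotate:
  assumes "t < length xs"
  shows "cyc_next (rotate n xs) t = cyc_next xs ((n + t) mod length xs)"
proof -
  have "0 < length xs" using assms by linarith
  thus ?thesis unfolding cyc_next_def by (simp add: nth_rotate mod_add_right_eq mod_Suc_eq)
qed

lemma column_step_rotate:
  "t < length xs \<Longrightarrow> column_step (rotate n xs) t = column_step xs ((n + t) mod length xs)"
  unfolding column_step_def by (simp add: nth_rotate cyc_next_rotate)

lemma turning_cycle_rotate:
  assumes "turning_cycle k l M xs"
  shows "turning_cycle k l M (rotate n xs)"
proof -
  have "3 \<le> length xs" using assms unfolding turning_cycle_def by blast
  hence L: "0 < length xs" by linarith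
  have lines: "same_line (rotate n xs ! t) (cyc_next (rotate n xs) t)" if "t < length xs" for t
    using assms L that unfolding turning_cycle_def by (simp add: nth_rotate cyc_next_rotate)
  have rotated_ex: "(\<exists>t<length xs. P (column_step (rotate n xs) t))
      \<longleftrightarrow> (\<exists>t<length xs. P (column_step xs t))" for P
  proof -
    have "\<forall>t<length xs. column_step (rotate n xs) t = column_step xs ((n + t) mod length xs)"
      using column_step_rotate by blast
    thus ?thesis using ex_less_mod_shift[OF L, of "\<lambda>t. P (column_step xs t)" n] by auto
  qed
  show ?thesis
    using assms lines rotated_ex[of "\<lambda>b. b"] rotated_ex[of Not] unfolding turning_cycle_def by simp
qed

lemma alternating_rotate:
  assumes "alternating xs"
  shows "alternating (rotate n xs)"
  unfolding alternating_def length_rotate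
proof (intro allI impI)
  fix t assume t: "t < length xs"
  hence L: "0 < length xs" by linarith
  have "column_step (rotate n xs) (Suc t mod length xs)
      = column_step xs (Suc ((n + t) mod length xs) mod length xs)"
  proof -
    have "Suc t mod length xs < length xs" using L by simp
    thus ?thesis by (simp add: column_step_rotate mod_add_right_eq mod_Suc_eq)
  qed
  moreover have "(n + t) mod length xs < length xs" using L by simp
  ultimately show "column_step (rotate n xs) t \<noteq> column_step (rotate n xs) (Suc t mod length xs)"
    using assms t unfolding alternating_def by (simp add: column_step_rotate)
qed

lemma cyc_next_Suc: "Suc t < length xs \<Longrightarrow> cyc_next xs t = xs ! Suc t"
  unfolding cyc_next_def by simp

lemma straight_step_shortcut:
  assumes "turning_cycle k l M xs" "column_step xs 0 = column_step xs 1"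
  shows "same_line (xs ! 0) (xs ! 2)" "(fst (xs ! 0) = fst (xs ! 2)) = column_step xs 0"
proof -
  have L: "3 \<le> length xs" and dist: "distinct xs"
    and lines: "\<forall>t<length xs. same_line (xs ! t) (cyc_next xs t)"
    using assms(1) unfolding turning_cycle_def by auto
  have ne: "xs \<noteq> []" using L by auto
  have steps: "column_step xs 0 = (fst (xs ! 0) = fst (xs ! 1))"
    "column_step xs 1 = (fst (xs ! 1) = fst (xs ! 2))"
    using L unfolding column_step_def by (simp_all add: cyc_next_Suc numeral_2_eq_2)
  have "same_line (xs ! 0) (xs ! 1)" "same_line (xs ! 1) (xs ! 2)"
    using lines[rule_format, of 0] lines[rule_format, of 1] L ne
    by (simp_all add: cyc_next_Suc numeral_2_eq_2)
  moreover have "xs ! 0 \<noteq> xs ! 2" using nth_eq_iff_index_eq[OF dist, of 0 2] L ne by simp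
  ultimately show "same_line (xs ! 0) (xs ! 2)" "(fst (xs ! 0) = fst (xs ! 2)) = column_step xs 0"
    using assms(2) steps unfolding same_line_def by (auto simp: prod_eq_iff)
qed

lemma straight_step_length:
  assumes "turning_cycle k l M xs" "column_step xs 0 = column_step xs 1"
  shows "4 \<le> length xs"
proof (rule ccontr)
  assume "\<not> 4 \<le> length xs"
  hence L: "length xs = 3" using assms(1) unfolding turning_cycle_def by simp
  have "column_step xs 2 = column_step xs 0"
    using straight_step_shortcut[OF assms] L unfolding column_step_def cyc_next_def by auto
  hence "column_step xs t = column_step xs 0" if "t < length xs" for t
    using that assms(2) L by (auto simp: less_Suc_eq numeral_3_eq_3 numeral_2_eq_2)
  thus False using assms(1) unfolding turning_cycle_def by metis
qed

lemma drop_straight_nth: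
  assumes "3 \<le> length xs" "0 < t" "t < length xs - 1"
  shows "(xs ! 0 # drop 2 xs) ! t = xs ! Suc t"
    "cyc_next (xs ! 0 # drop 2 xs) t = cyc_next xs (Suc t)"
proof -
  have nth: "(xs ! 0 # drop 2 xs) ! t = xs ! Suc t" if "0 < t" "t < length xs - 1" for t
    using that assms(1) by (cases t) auto
  thus "(xs ! 0 # drop 2 xs) ! t = xs ! Suc t" using assms(2,3) .
  show "cyc_next (xs ! 0 # drop 2 xs) t = cyc_next xs (Suc t)"
  proof (cases "Suc t < length xs - 1")
    case True thus ?thesis using nth[of "Suc t"] assms(1) by (simp add: cyc_next_Suc)
  next
    case False
    hence "Suc (Suc t) = length xs" using assms(3) by linarith
    hence "length (xs ! 0 # drop 2 xs) = Suc t" using assms(1) by auto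
    hence "Suc t mod length (xs ! 0 # drop 2 xs) = 0" "Suc (Suc t) mod length xs = 0"
      using \<open>Suc (Suc t) = length xs\<close> by auto
    thus ?thesis unfolding cyc_next_def by simp
  qed
qed

lemma column_step_drop_straight:
  assumes "turning_cycle k l M xs" "column_step xs 0 = column_step xs 1" "u < length xs - 1"
  shows "column_step (xs ! 0 # drop 2 xs) u = column_step xs (Suc u)"
proof (cases "u = 0")
  case True
  have "3 \<le> length xs" using assms(1) unfolding turning_cycle_def by simp
  hence "cyc_next (xs ! 0 # drop 2 xs) 0 = xs ! 2" unfolding cyc_next_def by auto
  thus ?thesis using True straight_step_shortcut(2)[OF assms(1,2)] assms(2)
    unfolding column_step_def by simp
next
  case False
  thus ?thesis using drop_straight_nth[of xs u] assms unfolding turning_cycle_def column_step_def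
    by simp
qed

lemma column_steps_drop_straight:
  assumes "turning_cycle k l M xs" and straight: "column_step xs 0 = column_step xs 1"
  shows "column_step (xs ! 0 # drop 2 xs) ` {..<length xs - 1} = column_step xs ` {..<length xs}"
proof -
  have L: "4 \<le> length xs" by (rule straight_step_length[OF assms])
  have "column_step (xs ! 0 # drop 2 xs) ` {..<length xs - 1} = column_step xs ` Suc ` {..<length xs - 1}"
    using column_step_drop_straight[OF assms] by (auto simp: image_image)
  also have "Suc ` {..<length xs - 1} = {1..length xs - 1}" by (rule image_Suc_lessThan)
  also have "column_step xs ` {1..length xs - 1} = column_step xs ` {..<length xs}"
  proof -
    have "{..<length xs} = insert 0 {1..length xs - 1}" using L by auto
    moreover have "column_step xs 0 \<in> column_step xs ` {1..length xs - 1}"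
      using straight L by (intro image_eqI[of _ _ 1]) auto
    ultimately show ?thesis by (simp add: insert_absorb)
  qed
  finally show ?thesis .
qed

lemma turning_cycle_drop_straight:
  assumes cyc: "turning_cycle k l M xs" and straight: "column_step xs 0 = column_step xs 1"
  shows "turning_cycle k l M (xs ! 0 # drop 2 xs)"
proof -
  let ?zs = "xs ! 0 # drop 2 xs"
  have L: "4 \<le> length xs" by (rule straight_step_length[OF assms])
  note images = column_steps_drop_straight[OF assms]
  have steps: "(\<exists>u<length xs - 1. P (column_step ?zs u)) \<longleftrightarrow> (\<exists>t<length xs. P (column_step xs t))"
    for P
  proof -
    have "(\<exists>u<length xs - 1. P (column_step ?zs u)) \<longleftrightarrow> (\<exists>v\<in>column_step ?zs ` {..<length xs - 1}. P v)"
      by auto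
    also have "\<dots> \<longleftrightarrow> (\<exists>t<length xs. P (column_step xs t))" unfolding images by auto
    finally show ?thesis .
  qed
  have "same_line (?zs ! u) (cyc_next ?zs u)" if "u < length xs - 1" for u
  proof (cases "u = 0")
    case True
    thus ?thesis using straight_step_shortcut(1)[OF assms] L unfolding cyc_next_def by auto
  next
    case False
    thus ?thesis using that drop_straight_nth[of xs u] cyc L unfolding turning_cycle_def by simp
  qed
  moreover have "xs = xs ! 0 # xs ! 1 # drop 2 xs"
    using L by (cases xs; cases "tl xs") auto
  hence "distinct ?zs"
    using cyc unfolding turning_cycle_def by (metis distinct.simps(2) list.set_intros(2))
  moreover have "0 < length xs" using L by linarith
  hence "set ?zs \<subseteq> set xs" by (auto dest: in_set_dropD)
  moreover have "length ?zs = length xs - 1" using L by simp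
  ultimately show ?thesis
    using cyc L steps[of "\<lambda>b. b"] steps[of Not] unfolding turning_cycle_def by auto
qed

lemma ex_alternating_turning_cycle:
  "turning_cycle k l M xs \<Longrightarrow> \<exists>ys. turning_cycle k l M ys \<and> alternating ys"
proof (induction "length xs" arbitrary: xs rule: less_induct)
  case less
  show ?case
  proof (cases "alternating xs")
    case False
    then obtain t where t: "t < length xs" "column_step xs t = column_step xs (Suc t mod length xs)"
      unfolding alternating_def by blast
    let ?zs = "rotate t xs"
    have L: "3 \<le> length xs" using less.prems unfolding turning_cycle_def by simp
    have "column_step ?zs 0 = column_step ?zs 1"
    proof -
      have "xs \<noteq> []" using L by auto
      thus ?thesis using t L column_step_rotate[of 0 xs t] column_step_rotate[of 1 xs t] by simp
    qed
    hence "turning_cycle k l M (?zs ! 0 # drop 2 ?zs)"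
      by (intro turning_cycle_drop_straight turning_cycle_rotate less.prems)
    moreover have "length (?zs ! 0 # drop 2 ?zs) < length xs" using L by simp
    ultimately show ?thesis using less.hyps by blast
  qed (use less.prems in blast)
qed

lemma alternating_column_step_iff:
  assumes "alternating xs" "t < length xs"
  shows "column_step xs t = (even t = column_step xs 0)"
  using assms(2)
proof (induction t)
  case (Suc t)
  hence "column_step xs (Suc t) \<noteq> column_step xs t"
    using assms(1) unfolding alternating_def by (metis Suc_lessD mod_less)
  thus ?case using Suc by auto
qed simp

lemma alternating_even_length:
  assumes "alternating xs" "xs \<noteq> []"
  shows "even (length xs)"
proof -
  let ?t = "length xs - 1"
  have t: "?t < length xs" "Suc ?t mod length xs = 0" using assms(2) by auto
  hence "column_step xs ?t \<noteq> column_step xs 0" using assms(1) unfolding alternating_def by metis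
  hence "odd ?t" using alternating_column_step_iff[OF assms(1) t(1)] by auto
  thus ?thesis using t(1) by simp
qed

lemma turn_cycle_of_alternating:
  assumes cyc: "turning_cycle k l M xs" and alt: "alternating xs" and col: "column_step xs 0"
  shows "turn_cycle k l M (length xs div 2) ((!) xs)"
proof -
  define r where "r = length xs div 2"
  have L: "3 \<le> length xs" "distinct xs" "\<forall>x\<in>set xs. cg_vertex k l M x"
    and lines: "\<forall>t<length xs. same_line (xs ! t) (cyc_next xs t)"
    using cyc unfolding turning_cycle_def by auto
  have "xs \<noteq> []" using L(1) by auto
  hence r: "2 * r = length xs" unfolding r_def using alternating_even_length[OF alt] by simp
  have steps: "column_step xs t = even t" if "t < 2 * r" for t
    using alternating_column_step_iff[OF alt] col that r by simp
  have "fst (xs ! (2*j)) = fst (xs ! (2*j+1))" if "j < r" for j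
    using steps[of "2*j"] that r unfolding column_step_def by (simp add: cyc_next_Suc)
  moreover have "snd (xs ! (2*j+1)) = snd (xs ! ((2*j+2) mod (2*r)))" if "j < r" for j
    using steps[of "2*j+1"] lines[rule_format, of "2*j+1"] that r
    unfolding column_step_def same_line_def cyc_next_def by simp
  ultimately show ?thesis
    using L r unfolding turn_cycle_def r_def[symmetric] by (auto intro: inj_on_nth)
qed

lemma ex_turn_cycle_of_turning_cycle:
  assumes "turning_cycle k l M xs"
  shows "\<exists>r T. turn_cycle k l M r T"
proof -
  obtain ys where ys: "turning_cycle k l M ys" "alternating ys"
    using ex_alternating_turning_cycle[OF assms] by blast
  have L: "3 \<le> length ys" using ys(1) unfolding turning_cycle_def by simp
  show ?thesis
  proof (cases "column_step ys 0")
    case False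
    have "column_step (rotate 1 ys) 0 = column_step ys 1"
    proof -
      have "ys \<noteq> []" using L by auto
      thus ?thesis using L column_step_rotate[of 0 ys 1] by simp
    qed
    also have "\<dots> \<noteq> column_step ys 0"
    proof -
      have "0 < length ys" "Suc 0 mod length ys = 1" using L by auto
      thus ?thesis using ys(2) unfolding alternating_def by force
    qed
    finally show ?thesis
      using False turn_cycle_of_alternating turning_cycle_rotate[OF ys(1)] alternating_rotate[OF ys(2)]
      by blast
  qed (use turn_cycle_of_alternating ys in blast)
qed

lemma constant_along_cycle:
  assumes "\<forall>t<length cs. f (cs ! t) = f (cyc_next cs t)" "t < length cs"
  shows "f (cs ! t) = f (cs ! 0)"
  using assms(2)
proof (induction t)
  case (Suc t) thus ?case using assms(1)[rule_format, of t] by (simp add: cyc_next_Suc)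
qed simp

lemma distinct_cyc_next:
  assumes "distinct cs" "2 \<le> length cs" "t < length cs"
  shows "cs ! t \<noteq> cyc_next cs t"
proof -
  have "0 < length cs" using assms(2) by linarith
  hence "Suc t mod length cs < length cs" by (rule mod_less_divisor)
  moreover have "Suc t mod length cs \<noteq> t" using assms(2,3) by (cases "Suc t = length cs") auto
  ultimately
  show ?thesis using nth_eq_iff_index_eq[OF assms(1) assms(3)] unfolding cyc_next_def by metis
qed

text \<open>The cell of largest coordinate has both neighbours on the same side, and the step to
  the farther one passes over the nearer one.\<close>
lemma cycle_along_line_impossible:
  fixes cs :: "'a list" and g :: "'a \<Rightarrow> nat"
  assumes L: "3 \<le> length cs" and "distinct cs" "inj_on g (set cs)" and V: "\<forall>x\<in>set cs. V (g x)"
    and gaps: "\<forall>t<length cs. \<forall>j. min (g (cs ! t)) (g (cyc_next cs t)) < j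
                  \<and> j < max (g (cs ! t)) (g (cyc_next cs t)) \<longrightarrow> \<not> V j"
  shows False
proof -
  have "Max (g ` set cs) \<in> g ` set cs" using L by (intro Max_in) auto
  then obtain t where t: "t < length cs" "g (cs ! t) = Max (g ` set cs)"
    by (metis imageE in_set_conv_nth)
  define p where "p = (if t = 0 then length cs - 1 else t - 1)"
  define q where "q = Suc t mod length cs"
  have p: "p < length cs" "cyc_next cs p = cs ! t"
    using t L unfolding p_def cyc_next_def by auto
  have "0 < length cs" using L by linarith
  hence q: "q < length cs" "cyc_next cs t = cs ! q" unfolding q_def cyc_next_def by auto
  have "p \<noteq> t" "q \<noteq> t" "p \<noteq> q" using t L unfolding p_def q_def by (auto simp: mod_Suc)
  hence neq: "g (cs ! p) \<noteq> g (cs ! t)" "g (cs ! q) \<noteq> g (cs ! t)" "g (cs ! p) \<noteq> g (cs ! q)"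
    using p(1) q(1) t(1) assms(2,3) by (auto simp: inj_on_eq_iff nth_eq_iff_index_eq)
  have "g (cs ! p) \<le> g (cs ! t)" "g (cs ! q) \<le> g (cs ! t)"
    using p(1) q(1) t(2) by auto
  hence below: "g (cs ! p) < g (cs ! t)" "g (cs ! q) < g (cs ! t)" using neq by auto
  show False
  proof (cases "g (cs ! p) < g (cs ! q)")
    case True
    thus False using gaps[rule_format, OF p(1), of "g (cs ! q)"] p(2) below V q(1) by auto
  next
    case False
    hence "g (cs ! q) < g (cs ! p)" using neq(3) by simp
    thus False using gaps[rule_format, OF t(1), of "g (cs ! p)"] q(2) below V p(1) by auto
  qed
qed

context
  fixes k l :: nat and M :: "nat \<Rightarrow> nat \<Rightarrow> cell" and cs :: "(nat \<times> nat) list"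
  assumes L: "3 \<le> length cs" "distinct cs"
    and adj: "\<forall>t<length cs. cg_adj k l M (cs ! t) (cyc_next cs t)"
begin

lemma cg_cycle_vertices: "\<forall>x\<in>set cs. cg_vertex k l M x"
  using adj unfolding cg_adj_def by (metis in_set_conv_nth)

lemma cg_cycle_has_column_step: "\<exists>t<length cs. column_step cs t"
proof (rule ccontr)
  assume "\<not> ?thesis"
  hence rows: "\<forall>t<length cs. snd (cs ! t) = snd (cyc_next cs t) \<and> (\<forall>i. min (fst (cs ! t))
      (fst (cyc_next cs t)) < i \<and> i < max (fst (cs ! t)) (fst (cyc_next cs t))
      \<longrightarrow> M i (snd (cs ! t)) = Emp)"
    using adj unfolding cg_adj_def column_step_def by auto
  hence "snd (cs ! t) = snd (cs ! 0)" if "t < length cs" for t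
    using constant_along_cycle[of cs snd t] that by blast
  hence same: "\<forall>x\<in>set cs. snd x = snd (cs ! 0)" by (metis in_set_conv_nth)
  show False
  proof (rule cycle_along_line_impossible[OF L, of fst "\<lambda>i. M i (snd (cs ! 0)) \<noteq> Emp"])
    show "inj_on fst (set cs)" using same by (intro inj_onI) (metis prod_eq_iff)
    show "\<forall>x\<in>set cs. M (fst x) (snd (cs ! 0)) \<noteq> Emp"
      using cg_cycle_vertices same unfolding cg_vertex_def by metis
    show "\<forall>t<length cs. \<forall>i. min (fst (cs ! t)) (fst (cyc_next cs t)) < i
        \<and> i < max (fst (cs ! t)) (fst (cyc_next cs t)) \<longrightarrow> \<not> M i (snd (cs ! 0)) \<noteq> Emp"
      using rows same by (metis nth_mem)
  qed
qed

lemma cg_cycle_has_row_step: "\<exists>t<length cs. \<not> column_step cs t"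
proof (rule ccontr)
  assume "\<not> ?thesis"
  hence cols: "\<forall>t<length cs. fst (cs ! t) = fst (cyc_next cs t)" unfolding column_step_def by auto
  hence gaps: "\<forall>t<length cs. \<forall>j. min (snd (cs ! t)) (snd (cyc_next cs t)) < j
      \<and> j < max (snd (cs ! t)) (snd (cyc_next cs t)) \<longrightarrow> M (fst (cs ! t)) j = Emp"
    using adj distinct_cyc_next[OF L(2)] L(1) unfolding cg_adj_def by (auto simp: prod_eq_iff)
  have "fst (cs ! t) = fst (cs ! 0)" if "t < length cs" for t
    using constant_along_cycle[OF cols that] .
  hence same: "\<forall>x\<in>set cs. fst x = fst (cs ! 0)" by (metis in_set_conv_nth)
  show False
  proof (rule cycle_along_line_impossible[OF L, of snd "\<lambda>j. M (fst (cs ! 0)) j \<noteq> Emp"])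
    show "inj_on snd (set cs)" using same by (intro inj_onI) (metis prod_eq_iff)
    show "\<forall>x\<in>set cs. M (fst (cs ! 0)) (snd x) \<noteq> Emp"
      using cg_cycle_vertices same unfolding cg_vertex_def by metis
    show "\<forall>t<length cs. \<forall>j. min (snd (cs ! t)) (snd (cyc_next cs t)) < j
        \<and> j < max (snd (cs ! t)) (snd (cyc_next cs t)) \<longrightarrow> \<not> M (fst (cs ! 0)) j \<noteq> Emp"
      using gaps same by (metis nth_mem)
  qed
qed

lemma turning_cycle_of_cg_cycle: "turning_cycle k l M cs"
proof -
  have "\<forall>t<length cs. same_line (cs ! t) (cyc_next cs t)"
    using adj unfolding cg_adj_def same_line_def by blast
  thus ?thesis using L cg_cycle_vertices cg_cycle_has_column_step cg_cycle_has_row_step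
    unfolding turning_cycle_def by blast
qed

end

lemma mixed_radix_eq_iff:
  fixes a b a' b' B :: nat
  assumes "b < B" "b' < B"
  shows "a * B + b = a' * B + b' \<longleftrightarrow> a = a' \<and> b = b'"
proof
  assume "a * B + b = a' * B + b'"
  hence "(a * B + b) div B = (a' * B + b') div B" "(a * B + b) mod B = (a' * B + b') mod B"
    by simp_all
  thus "a = a' \<and> b = b'" using assms by simp
qed simp

lemma mixed_radix_div_mod:
  fixes a b B :: nat
  shows "b < B \<Longrightarrow> (a * B + b) div B = a \<and> (a * B + b) mod B = b"
  by simp

section \<open>The spiral permutation\<close>

text \<open>Point \<open>(t, i)\<close> is the \<open>i\<close>-th point of \<open>T t\<close>. Positions are ordered by the column of
  the cell, then by the column pair \<open>t div 2\<close>, then by \<open>i\<close>, the two cells of a column pair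
  interleaved. Values are ordered by the row of the cell, then by the row pair \<open>row_pair t\<close>
  (cells \<open>T (2 * j + 1)\<close> and \<open>T (2 * j + 2)\<close>, with \<open>T (2 * r - 1)\<close> paired with \<open>T 0\<close>), then
  by \<open>yoffset\<close>, again interleaving the two cells. Both keys are read in the mixed radix
  \<open>block_base\<close>, \<open>inner_base\<close>, and ranked to give the permutation.\<close>

locale spiral_grid =
  fixes k l :: nat and M :: "nat \<Rightarrow> nat \<Rightarrow> cell" and r :: nat and T :: "nat \<Rightarrow> nat \<times> nat"
    and s :: nat
  assumes turn_cycle: "turn_cycle k l M r T" and s_pos: "1 \<le> s"
begin

definition dec :: "nat \<Rightarrow> nat" where
  "dec t = (if M (fst (T t)) (snd (T t)) = Dec then 1 else 0)"

definition twist :: nat where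
  "twist = (\<Sum>t<2*r. dec t) mod 2"

definition spirals :: nat where
  "spirals = Suc twist * s"

definition laps :: nat where
  "laps = 2 * spirals + 1"

definition half :: nat where
  "half = (laps + 2) * spirals"

definition reflect :: "nat \<Rightarrow> nat \<Rightarrow> nat" where
  "reflect e i = (if odd e then 2 * half + 1 - i else i)"

definition twists_before :: "nat \<Rightarrow> nat" where
  "twists_before t = (\<Sum>u\<in>{1..2 * (t div 2)}. dec u)"

definition lift :: "nat \<Rightarrow> nat" where
  "lift i = (if i \<le> half then i else i + 2 * s)"

definition inner_base :: nat where
  "inner_base = 16 * half"

definition block_base :: nat where
  "block_base = Suc r * inner_base"

definition points :: "(nat \<times> nat) set" where
  "points = {..<2*r} \<times> {1..2*half}"

definition xkey :: "nat \<times> nat \<Rightarrow> nat" where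
  "xkey p = fst (T (fst p)) * block_base + (fst p div 2) * inner_base + (2 * snd p + fst p mod 2)"

definition row_pair :: "nat \<Rightarrow> nat" where
  "row_pair t = (if t = 0 then r - 1 else (t - 1) div 2)"

definition yoffset :: "nat \<Rightarrow> nat \<Rightarrow> nat" where
  "yoffset t i =
     (if odd t then (if t = 2*r - 1 then 2 * (reflect (dec t) i + s) else 2 * reflect (dec t) i)
      else (if t = 0 then 2 * lift (reflect (dec t) i) + 1 else 2 * reflect (dec t) i + 1))"

definition ykey :: "nat \<times> nat \<Rightarrow> nat" where
  "ykey p = snd (T (fst p)) * block_base + row_pair (fst p) * inner_base + yoffset (fst p) (snd p)"

definition xrank :: "nat \<times> nat \<Rightarrow> nat" where
  "xrank = rank xkey points"

definition yrank :: "nat \<times> nat \<Rightarrow> nat" where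
  "yrank = rank ykey points"

definition len :: nat where
  "len = card points"

definition perm :: "nat \<Rightarrow> nat" where
  "perm m = yrank (inv_into points xrank m)"

lemma r_pos: "1 \<le> r"
  and T_vertex: "t < 2*r \<Longrightarrow> cg_vertex k l M (T t)"
  and inj_on_T: "inj_on T {..<2*r}"
  and T_column: "j < r \<Longrightarrow> fst (T (2*j)) = fst (T (2*j+1))"
  and T_row: "j < r \<Longrightarrow> snd (T (2*j+1)) = snd (T ((2*j+2) mod (2*r)))"
  using turn_cycle unfolding turn_cycle_def by auto

lemma twist_le_1: "twist \<le> 1"
  unfolding twist_def by simp

lemma s_le_spirals: "s \<le> spirals"
  unfolding spirals_def by simp

lemma half_eq: "half = 2 * spirals * spirals + 3 * spirals"
  unfolding half_def laps_def by (simp add: algebra_simps)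

lemma half_ge: "3 * s \<le> half" "2 * spirals + 2 \<le> half"
proof -
  have "1 \<le> spirals" using s_le_spirals s_pos by linarith
  hence "spirals \<le> spirals * spirals" by simp
  thus "3 * s \<le> half" "2 * spirals + 2 \<le> half" using s_le_spirals \<open>1 \<le> spirals\<close>
    unfolding half_eq by linarith+
qed

lemma reflect_range: "i \<in> {1..2*half} \<Longrightarrow> reflect e i \<in> {1..2*half}"
  unfolding reflect_def by auto

lemma reflect_reflect: "i \<le> 2*half \<Longrightarrow> reflect a (reflect b i) = reflect (a + b) i"
  unfolding reflect_def by auto

lemma reflect_even: "even e \<Longrightarrow> reflect e i = i"
  unfolding reflect_def by simp

lemma reflect_cong_parity: "odd a = odd b \<Longrightarrow> reflect a i = reflect b i"
  unfolding reflect_def by simp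

lemma reflect_inject: "i \<le> 2*half \<Longrightarrow> i' \<le> 2*half \<Longrightarrow> reflect e i = reflect e i' \<longleftrightarrow> i = i'"
  unfolding reflect_def by auto

lemma finite_points: "finite points"
  unfolding points_def by simp

lemma low_xkey_less: "p \<in> points \<Longrightarrow> 2 * snd p + fst p mod 2 < inner_base"
  unfolding points_def inner_base_def using half_ge by auto

lemma yoffset_less: "i \<in> {1..2*half} \<Longrightarrow> yoffset t i < inner_base"
proof -
  assume "i \<in> {1..2*half}"
  hence "reflect (dec t) i \<le> 2*half" using reflect_range by auto
  moreover hence "lift (reflect (dec t) i) \<le> 2*half + 2*s" unfolding lift_def by auto
  ultimately show ?thesis using half_ge unfolding yoffset_def inner_base_def by auto
qed

lemma pair_key_less:
  assumes "m \<le> r - 1" "x < inner_base"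
  shows "m * inner_base + x < block_base"
proof -
  have "m * inner_base \<le> (r - 1) * inner_base" using assms(1) by (rule mult_right_mono) simp
  hence "m * inner_base + x < (r - 1) * inner_base + inner_base" using assms(2) by linarith
  also have "\<dots> \<le> block_base" unfolding block_base_def using r_pos by (cases r) auto
  finally show ?thesis .
qed

lemma xkey_split:
  assumes "p \<in> points"
  shows "(fst p div 2) * inner_base + (2 * snd p + fst p mod 2) < block_base"
proof (rule pair_key_less[OF _ low_xkey_less[OF assms]])
  show "fst p div 2 \<le> r - 1" using assms unfolding points_def by auto
qed

lemma row_pair_le:
  assumes "t < 2*r"
  shows "row_pair t \<le> r - 1"
proof -
  have "(t - 1) div 2 \<le> r - 1" using assms by linarith
  thus ?thesis unfolding row_pair_def by simp
qed

lemma ykey_split: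
  "p \<in> points \<Longrightarrow> row_pair (fst p) * inner_base + yoffset (fst p) (snd p) < block_base"
  using pair_key_less[OF row_pair_le] yoffset_less unfolding points_def by auto

lemma inj_on_xkey: "inj_on xkey points"
proof (rule inj_onI)
  fix p q assume p: "p \<in> points" and q: "q \<in> points" and eq: "xkey p = xkey q"
  have "fst p div 2 = fst q div 2" and low: "2 * snd p + fst p mod 2 = 2 * snd q + fst q mod 2"
    using eq mixed_radix_eq_iff[OF xkey_split[OF p] xkey_split[OF q]]
      mixed_radix_eq_iff[OF low_xkey_less[OF p] low_xkey_less[OF q]]
    unfolding xkey_def by (simp_all add: add.assoc)
  moreover have "fst p mod 2 = fst q mod 2"
    using arg_cong[OF low, of "\<lambda>n. n mod 2"] by simp
  ultimately have "fst p = fst q" by (metis div_mult_mod_eq)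
  moreover from this have "snd p = snd q" using low by simp
  ultimately show "p = q" by (simp add: prod_eq_iff)
qed

lemma lift_less_iff: "lift i < lift i' \<longleftrightarrow> i < i'"
  unfolding lift_def by auto

lemma reflect_less_iff:
  "i \<le> 2*half \<Longrightarrow> i' \<le> 2*half \<Longrightarrow> reflect e i < reflect e i' \<longleftrightarrow> (if odd e then i' < i else i < i')"
  unfolding reflect_def by auto

lemma yoffset_less_iff:
  assumes "i \<le> 2*half" "i' \<le> 2*half"
  shows "yoffset t i < yoffset t i' \<longleftrightarrow> (if odd (dec t) then i' < i else i < i')"
proof -
  \<comment> \<open>a fresh name keeps the case splits on \<open>t\<close> from rewriting \<open>dec t\<close> to \<open>dec 0\<close>\<close>
  obtain e where e: "dec t = e" by blast
  show ?thesis
    using reflect_less_iff[OF assms, of e] unfolding yoffset_def e by (simp add: lift_less_iff)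
qed

lemma yoffset_inject:
  assumes "i \<le> 2*half" "i' \<le> 2*half"
  shows "yoffset t i = yoffset t i' \<longleftrightarrow> i = i'"
  using yoffset_less_iff[OF assms, of t] yoffset_less_iff[OF assms(2,1), of t]
  by (cases "i < i'"; cases "i' < i"; cases "odd (dec t)") auto

lemma odd_yoffset: "odd (yoffset t i) \<longleftrightarrow> even t"
  unfolding yoffset_def by auto

lemma row_pair_inverse:
  assumes "t < 2*r"
  shows "t = (if odd t then 2 * row_pair t + 1 else if row_pair t = r - 1 then 0 else 2 * row_pair t + 2)"
proof (cases "t = 0")
  case False
  thus ?thesis using assms unfolding row_pair_def by (auto elim!: oddE evenE; linarith)
qed (simp add: row_pair_def)

lemma inj_on_ykey: "inj_on ykey points"
proof (rule inj_onI)
  fix p q assume p: "p \<in> points" and q: "q \<in> points" and eq: "ykey p = ykey q"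
  have i: "snd p \<in> {1..2*half}" "snd q \<in> {1..2*half}" using p q unfolding points_def by auto
  have pair: "row_pair (fst p) = row_pair (fst q)"
    and low: "yoffset (fst p) (snd p) = yoffset (fst q) (snd q)"
    using eq mixed_radix_eq_iff[OF ykey_split[OF p] ykey_split[OF q]]
      mixed_radix_eq_iff[OF yoffset_less[OF i(1)] yoffset_less[OF i(2)]]
    unfolding ykey_def by (simp_all add: add.assoc)
  have parity: "odd (fst p) = odd (fst q)" using odd_yoffset low by metis
  have t: "fst p < 2*r" "fst q < 2*r" using p q unfolding points_def by auto
  have "fst p = (if odd (fst q) then 2 * row_pair (fst q) + 1
      else if row_pair (fst q) = r - 1 then 0 else 2 * row_pair (fst q) + 2)"
    using row_pair_inverse[OF t(1)] unfolding pair parity .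
  also have "\<dots> = fst q" by (rule row_pair_inverse[OF t(2), symmetric])
  finally have "fst p = fst q" .
  moreover hence "snd p = snd q" using low yoffset_inject p q unfolding points_def by auto
  ultimately show "p = q" by (simp add: prod_eq_iff)
qed

definition plot :: "nat \<times> nat \<Rightarrow> nat \<times> nat" where
  "plot p = (xrank p, yrank p)"

lemma bij_betw_xrank: "bij_betw xrank points {1..len}"
  unfolding xrank_def len_def by (rule bij_betw_rank[OF finite_points inj_on_xkey])

lemma bij_betw_yrank: "bij_betw yrank points {1..len}"
  unfolding yrank_def len_def by (rule bij_betw_rank[OF finite_points inj_on_ykey])

lemma xrank_less_iff: "p \<in> points \<Longrightarrow> q \<in> points \<Longrightarrow> xrank p < xrank q \<longleftrightarrow> xkey p < xkey q"
  unfolding xrank_def by (rule rank_less_iff[OF finite_points inj_on_xkey])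

lemma yrank_less_iff: "p \<in> points \<Longrightarrow> q \<in> points \<Longrightarrow> yrank p < yrank q \<longleftrightarrow> ykey p < ykey q"
  unfolding yrank_def by (rule rank_less_iff[OF finite_points inj_on_ykey])

lemma inj_on_plot: "inj_on plot points"
  using bij_betw_xrank unfolding plot_def bij_betw_def inj_on_def by auto

lemma zero_one_in_points: "(0, 1) \<in> points"
  unfolding points_def using r_pos half_ge by auto

lemma len_pos: "1 \<le> len"
proof -
  have "points \<noteq> {}" using zero_one_in_points by blast
  thus ?thesis unfolding len_def using finite_points by (simp add: Suc_le_eq card_gt_0_iff)
qed

lemma is_perm_perm: "is_perm len perm"
proof -
  have "bij_betw (yrank \<circ> inv_into points xrank) {1..len} {1..len}"
    using bij_betw_inv_into[OF bij_betw_xrank] bij_betw_yrank by (rule bij_betw_trans)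
  thus ?thesis unfolding is_perm_def perm_def[abs_def] by (simp add: comp_def)
qed

lemma diagram_perm: "diagram len perm = plot ` points"
proof -
  have inj: "inj_on xrank points" and img: "xrank ` points = {1..len}"
    using bij_betw_xrank unfolding bij_betw_def by auto
  have "diagram len perm = (\<lambda>i. (i, perm i)) ` xrank ` points"
    unfolding diagram_def img by auto
  also have "\<dots> = plot ` points"
    unfolding image_image perm_def plot_def using inv_into_f_f[OF inj] by (intro image_cong) simp_all
  finally show ?thesis .
qed

definition column_block :: "nat \<Rightarrow> nat set" where
  "column_block c = xrank ` {p\<in>points. fst (T (fst p)) = c}"

definition row_block :: "nat \<Rightarrow> nat set" where
  "row_block c = yrank ` {p\<in>points. snd (T (fst p)) = c}"

lemma T_in_grid: "p \<in> points \<Longrightarrow> fst (T (fst p)) \<in> {1..k} \<and> snd (T (fst p)) \<in> {1..l}"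
  using T_vertex unfolding points_def cg_vertex_def by auto

lemma interval_partition_column_block: "interval_partition k len column_block"
proof -
  have block: "xkey p div block_base = fst (T (fst p))" if "p \<in> points" for p
    using xkey_split[OF that] unfolding xkey_def by (simp add: add.assoc)
  hence "column_block = (\<lambda>c. rank xkey points ` {p\<in>points. xkey p div block_base = c})"
    unfolding column_block_def xrank_def by (intro ext image_cong) auto
  moreover have "0 < block_base" using xkey_split[OF zero_one_in_points] by linarith
  ultimately show ?thesis
    unfolding len_def using block T_in_grid
    by (simp add: interval_partition_rank_blocks[OF finite_points inj_on_xkey])
qed

lemma interval_partition_row_block: "interval_partition l len row_block"
proof -
  have block: "ykey p div block_base = snd (T (fst p))" if "p \<in> points" for p
    using ykey_split[OF that] unfolding ykey_def by (simp add: add.assoc)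
  hence "row_block = (\<lambda>c. rank ykey points ` {p\<in>points. ykey p div block_base = c})"
    unfolding row_block_def yrank_def by (intro ext image_cong) auto
  moreover have "0 < block_base" using ykey_split[OF zero_one_in_points] by linarith
  ultimately show ?thesis
    unfolding len_def using block T_in_grid
    by (simp add: interval_partition_rank_blocks[OF finite_points inj_on_ykey])
qed

lemma diagram_cell:
  "diagram len perm \<inter> (column_block c \<times> row_block c') = plot ` {p\<in>points. T (fst p) = (c, c')}"
proof -
  have "xrank p \<in> column_block c \<longleftrightarrow> fst (T (fst p)) = c" if "p \<in> points" for p
    using that bij_betw_xrank unfolding column_block_def bij_betw_def by (auto dest: inj_onD)
  moreover have "yrank p \<in> row_block c' \<longleftrightarrow> snd (T (fst p)) = c'" if "p \<in> points" for p
    using that bij_betw_yrank unfolding row_block_def bij_betw_def by (auto dest: inj_onD)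
  ultimately show ?thesis unfolding diagram_perm plot_def by (auto simp: prod_eq_iff)
qed

lemma points_in_cell: "t < 2*r \<Longrightarrow> {p\<in>points. T (fst p) = T t} = {t} \<times> {1..2*half}"
  using inj_on_T unfolding points_def by (auto dest: inj_onD)

lemma cell_ok_turn:
  assumes "t < 2*r"
  shows "cell_ok (M (fst (T t)) (snd (T t))) (plot ` ({t} \<times> {1..2*half}))"
proof -
  have pt: "(t, i) \<in> points" if "i \<in> {1..2*half}" for i using assms that unfolding points_def by auto
  have x: "xrank (t, i) < xrank (t, i') \<longleftrightarrow> i < i'" if "i \<in> {1..2*half}" "i' \<in> {1..2*half}" for i i'
    using xrank_less_iff[OF pt[OF that(1)] pt[OF that(2)]] unfolding xkey_def by simp
  have y: "yrank (t, i) < yrank (t, i') \<longleftrightarrow> (if odd (dec t) then i' < i else i < i')"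
    if "i \<in> {1..2*half}" "i' \<in> {1..2*half}" for i i'
    using yrank_less_iff[OF pt[OF that(1)] pt[OF that(2)]] yoffset_less_iff[of i i' t] that
    unfolding ykey_def by simp
  have "M (fst (T t)) (snd (T t)) \<noteq> Emp" using T_vertex[OF assms] unfolding cg_vertex_def by simp
  thus ?thesis
  proof (cases "M (fst (T t)) (snd (T t))")
    case Inc
    hence "even (dec t)" unfolding dec_def by simp
    thus ?thesis unfolding Inc plot_def using x y by force
  next
    case Dec
    hence "odd (dec t)" unfolding dec_def by simp
    thus ?thesis unfolding Dec plot_def using x y by force
  qed simp
qed

theorem in_Grid_perm: "in_Grid k l M len perm"
  unfolding in_Grid_def is_gridding_def
proof (intro conjI exI ballI)
  fix c c' assume "c \<in> {1..k}" "c' \<in> {1..l}"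
  show "cell_ok (M c c') (diagram len perm \<inter> (column_block c \<times> row_block c'))"
  proof (cases "\<exists>t<2*r. T t = (c, c')")
    case True
    then obtain t where t: "t < 2*r" "T t = (c, c')" by blast
    hence "diagram len perm \<inter> (column_block c \<times> row_block c') = plot ` ({t} \<times> {1..2*half})"
      unfolding diagram_cell using points_in_cell[OF t(1)] by simp
    thus ?thesis using cell_ok_turn[OF t(1)] t(2) by simp
  next
    case False
    hence "{p\<in>points. T (fst p) = (c, c')} = {}" unfolding points_def by auto
    thus ?thesis unfolding diagram_cell by (cases "M c c'") auto
  qed
qed (rule is_perm_perm interval_partition_column_block interval_partition_row_block)+

section \<open>Spirals and rungs\<close>

text \<open>Spiral \<open>x\<close> starts lap \<open>j\<close> in \<open>T 0\<close> at index \<open>level x j\<close>: every lap adds \<open>s\<close> to the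
  index, and a lap around the cycle reflects it if \<open>twist\<close> is odd.\<close>
definition level :: "nat \<Rightarrow> nat \<Rightarrow> nat" where
  "level x j = reflect (twist * j) (x + j * s)"

definition spiral :: "nat \<Rightarrow> nat \<Rightarrow> nat \<times> nat" where
  "spiral x u = (u mod (2*r), reflect (twists_before (u mod (2*r))) (level x (u div (2*r))))"

definition spiral_length :: nat where
  "spiral_length = 2 * r * laps"

definition Spiral :: "nat \<Rightarrow> (nat \<times> nat) set" where
  "Spiral x = spiral x ` {..<spiral_length}"

definition rung :: "nat \<Rightarrow> nat \<Rightarrow> nat \<times> nat" where
  "rung q u = (u mod 2, q * spirals + 1 + u div 2)"

definition Rung :: "nat \<Rightarrow> (nat \<times> nat) set" where
  "Rung q = rung q ` {..<2 * spirals}"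

definition key_adjacent :: "nat \<times> nat \<Rightarrow> nat \<times> nat \<Rightarrow> bool" where
  "key_adjacent a b \<longleftrightarrow> xkey b = Suc (xkey a) \<or> ykey b = Suc (ykey a)"

lemma level_room: "x \<le> spirals \<Longrightarrow> j < laps \<Longrightarrow> x + j * s + s \<le> half"
proof -
  assume "x \<le> spirals" "j < laps"
  moreover hence "j * s \<le> 2 * spirals * spirals"
    using s_le_spirals unfolding laps_def by (intro mult_le_mono) auto
  ultimately show ?thesis using s_le_spirals unfolding half_eq by linarith
qed

lemma level_range: "x \<in> {1..spirals} \<Longrightarrow> j < laps \<Longrightarrow> level x j \<in> {1..2*half}"
  unfolding level_def using level_room[of x j] by (intro reflect_range) auto

text \<open>Distinct spirals, or distinct laps of one spiral, never share a level: unreflected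
  levels of different laps differ by at least \<open>spirals\<close>.\<close>
lemma level_inject:
  assumes x: "x \<in> {1..spirals}" "x' \<in> {1..spirals}" and j: "j < laps" "j' < laps"
    and eq: "level x j = level x' j'"
  shows "x = x' \<and> j = j'"
proof -
  have room: "x + j * s \<le> half" "x' + j' * s \<le> half" using level_room x j by fastforce+
  have parity: "odd (twist * j) = odd (twist * j')"
    using eq room unfolding level_def reflect_def by (auto split: if_splits)
  hence w: "x + j * s = x' + j' * s"
    using eq room reflect_cong_parity[OF parity] reflect_inject unfolding level_def by force
  have far: "spirals \<le> (b - a) * s" if "a < b" "odd (twist * a) = odd (twist * b)" for a b
  proof -
    have "Suc twist \<le> b - a"
    proof (cases "twist = 0")
      case False
      hence "twist = 1" using twist_le_1 by simp
      thus ?thesis using that by simp presburger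
    qed (use that in simp)
    thus ?thesis unfolding spirals_def by (rule mult_right_mono) simp
  qed
  have "\<not> j < j'" using far[of j j'] parity w x by (auto simp: diff_mult_distrib)
  moreover have "\<not> j' < j" using far[of j' j] parity w x by (auto simp: diff_mult_distrib)
  ultimately show ?thesis using w by simp
qed

lemma twists_before_0: "twists_before 0 = 0"
  unfolding twists_before_def by simp

lemma twists_before_even: "even t \<Longrightarrow> twists_before (Suc t) = twists_before t"
  unfolding twists_before_def by simp

lemma twists_before_odd: "odd t \<Longrightarrow> twists_before (Suc t) = twists_before t + dec t + dec (Suc t)"
proof -
  assume "odd t"
  then obtain m where m: "t = Suc (2 * m)" by (metis oddE Suc_eq_plus1)
  hence "2 * (Suc t div 2) = Suc (Suc (2 * m))" "2 * (t div 2) = 2 * m" by auto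
  thus ?thesis unfolding twists_before_def m by simp
qed

lemma sum_dec_eq: "(\<Sum>t<2*r. dec t) = dec 0 + twists_before (2*r - 1) + dec (2*r - 1)"
proof -
  obtain m where m: "r = Suc m" using r_pos by (cases r) auto
  have "(\<Sum>t<Suc (2*m). dec t) = dec 0 + (\<Sum>u\<in>{1..2*m}. dec u)"
    by (simp only: sum.lessThan_Suc_shift One_nat_def sum.atLeast1_atMost_eq)
  moreover have "2 * ((2*r - 1) div 2) = 2 * m" using m by simp
  ultimately show ?thesis unfolding twists_before_def m by simp
qed

lemma column_step_adjacent:
  assumes "even t" "Suc t < 2*r"
  shows "key_adjacent (t, reflect (twists_before t) z) (Suc t, reflect (twists_before (Suc t)) z)"
proof -
  obtain j where j: "t = 2 * j" using assms(1) by (metis evenE)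
  hence "fst (T t) = fst (T (Suc t))" using T_column[of j] assms(2) by simp
  moreover have "Suc t div 2 = t div 2" "Suc t mod 2 = 1" "t mod 2 = 0" using j by auto
  ultimately show ?thesis unfolding key_adjacent_def xkey_def twists_before_even[OF assms(1)] by simp
qed

lemma row_step_adjacent:
  assumes "odd t" "Suc t < 2*r" "z \<in> {1..2*half}"
  shows "key_adjacent (t, reflect (twists_before t) z) (Suc t, reflect (twists_before (Suc t)) z)"
proof -
  obtain j where j: "t = 2 * j + 1" using assms(1) by (metis oddE)
  have "snd (T t) = snd (T (Suc t))" using T_row[of j] j assms(2) by simp
  moreover have "row_pair t = j" "row_pair (Suc t) = j" unfolding row_pair_def using j by auto
  moreover have "dec (Suc t) + twists_before (Suc t) = dec t + twists_before t + 2 * dec (Suc t)"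
    using twists_before_odd[OF assms(1)] by simp
  hence "odd (dec (Suc t) + twists_before (Suc t)) = odd (dec t + twists_before t)"
    by (simp only: even_add even_mult_iff even_numeral simp_thms)
  hence "reflect (dec (Suc t) + twists_before (Suc t)) z = reflect (dec t + twists_before t) z"
    by (rule reflect_cong_parity)
  hence "reflect (dec (Suc t)) (reflect (twists_before (Suc t)) z)
      = reflect (dec t) (reflect (twists_before t) z)"
    using assms(3) by (simp add: reflect_reflect)
  moreover have "t \<noteq> 2*r - 1" using assms(2) by simp
  ultimately show ?thesis using assms(1) unfolding key_adjacent_def ykey_def yoffset_def by simp
qed

text \<open>The closing turn lifts the level by \<open>s\<close>: the \<open>2 * s\<close> gap that \<open>lift\<close> leaves in
  \<open>T 0\<close> above \<open>half\<close> makes this work whether or not the levels have been reflected.\<close>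
lemma closing_step_adjacent:
  assumes x: "x \<in> {1..spirals}" and j: "Suc j < laps"
  shows "key_adjacent (2*r - 1, reflect (twists_before (2*r - 1)) (level x j))
    (0, reflect (twists_before 0) (level x (Suc j)))"
proof -
  define w where "w = x + j * s"
  define e where "e = dec 0 + twist * Suc j"
  have room: "w + s \<le> half" using level_room[of x j] x j unfolding w_def by simp
  have row: "snd (T (2*r - 1)) = snd (T 0)"
    using T_row[of "r - 1"] r_pos by (simp add: Suc_diff_Suc numeral_2_eq_2)
  have pair: "row_pair (2*r - 1) = r - 1" "row_pair 0 = r - 1" unfolding row_pair_def using r_pos by auto
  have "odd twist = odd (dec 0 + twists_before (2*r - 1) + dec (2*r - 1))"
    using sum_dec_eq unfolding twist_def by simp
  hence "odd (dec (2*r - 1) + (twists_before (2*r - 1) + twist * j)) = odd e"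
    unfolding e_def by auto
  hence "reflect (dec (2*r - 1) + (twists_before (2*r - 1) + twist * j)) w = reflect e w"
    by (rule reflect_cong_parity)
  hence "reflect (dec (2*r - 1)) (reflect (twists_before (2*r - 1)) (level x j)) = reflect e w"
    using room unfolding level_def w_def by (simp add: reflect_reflect)
  moreover have "reflect (dec 0) (reflect (twists_before 0) (level x (Suc j))) = reflect e (w + s)"
    using room unfolding level_def w_def e_def twists_before_0
    by (simp add: reflect_reflect reflect_even algebra_simps)
  moreover have "lift (reflect e (w + s)) = reflect e w + s"
    using room unfolding lift_def reflect_def by auto
  moreover have "odd (2*r - 1)" "2*r - 1 \<noteq> 0" using r_pos by auto
  ultimately show ?thesis unfolding key_adjacent_def ykey_def yoffset_def using row pair by simp
qed

lemma spiral_in_points: "x \<in> {1..spirals} \<Longrightarrow> u < spiral_length \<Longrightarrow> spiral x u \<in> points"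
proof -
  assume x: "x \<in> {1..spirals}" and u: "u < spiral_length"
  hence "u div (2*r) < laps" using r_pos unfolding spiral_length_def
    by (simp add: div_less_iff_less_mult mult.commute)
  hence "level x (u div (2*r)) \<in> {1..2*half}" using level_range x by simp
  hence "reflect (twists_before (u mod (2*r))) (level x (u div (2*r))) \<in> {1..2*half}"
    by (rule reflect_range)
  thus ?thesis using r_pos unfolding spiral_def points_def by simp
qed

lemma spiral_adjacent:
  assumes x: "x \<in> {1..spirals}" and u: "Suc u < spiral_length"
  shows "key_adjacent (spiral x u) (spiral x (Suc u))"
proof -
  define t where "t = u mod (2*r)"
  define j where "j = u div (2*r)"
  have u_eq: "u = j * (2*r) + t" unfolding t_def j_def by (rule div_mult_mod_eq[symmetric])
  have t: "t < 2*r" unfolding t_def using r_pos by simp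
  have "u < laps * (2*r)" using u unfolding spiral_length_def by (simp add: mult.commute)
  hence j: "j < laps" unfolding j_def using r_pos by (simp add: div_less_iff_less_mult)
  show ?thesis
  proof (cases "Suc t < 2*r")
    case True
    moreover have "Suc u = j * (2*r) + Suc t" using u_eq by simp
    ultimately have "Suc u mod (2*r) = Suc t" "Suc u div (2*r) = j"
      using mixed_radix_div_mod[OF True, of j] by simp_all
    moreover have "level x j \<in> {1..2*half}" using level_range x j by simp
    ultimately show ?thesis
      using column_step_adjacent[OF _ True] row_step_adjacent[OF _ True]
      unfolding spiral_def t_def[symmetric] j_def[symmetric] by (cases "even t") auto
  next
    case False
    hence t_last: "t = 2*r - 1" using t by simp
    hence "Suc u = Suc j * (2*r)" unfolding u_eq using r_pos by (simp add: algebra_simps)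
    moreover from this have "Suc j * (2*r) < laps * (2*r)"
      using u unfolding spiral_length_def by (metis mult.commute)
    hence "Suc j < laps" using mult_less_cancel2 by blast
    ultimately show ?thesis using closing_step_adjacent[OF x] r_pos
      unfolding spiral_def t_def[symmetric] j_def[symmetric] t_last by simp
  qed
qed

lemma spiral_inject:
  assumes x: "x \<in> {1..spirals}" "x' \<in> {1..spirals}" and u: "u < spiral_length" "u' < spiral_length"
    and eq: "spiral x u = spiral x' u'"
  shows "x = x' \<and> u = u'"
proof -
  have j: "u div (2*r) < laps" "u' div (2*r) < laps"
    using u r_pos unfolding spiral_length_def by (simp_all add: div_less_iff_less_mult mult.commute)
  have t: "u mod (2*r) = u' mod (2*r)" using eq unfolding spiral_def by simp
  hence "reflect (twists_before (u mod (2*r))) (level x (u div (2*r)))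
      = reflect (twists_before (u mod (2*r))) (level x' (u' div (2*r)))"
    using eq unfolding spiral_def by simp
  hence "level x (u div (2*r)) = level x' (u' div (2*r))"
    using level_range[OF x(1) j(1)] level_range[OF x(2) j(2)] reflect_inject by simp
  hence xj: "x = x' \<and> u div (2*r) = u' div (2*r)" by (rule level_inject[OF x j])
  have "u = u div (2*r) * (2*r) + u mod (2*r)" by (rule div_mult_mod_eq[symmetric])
  also have "\<dots> = u' div (2*r) * (2*r) + u' mod (2*r)" using xj t by simp
  also have "\<dots> = u'" by (rule div_mult_mod_eq)
  finally have "u = u'" .
  with xj show ?thesis by blast
qed

lemma card_Spiral:
  assumes "x \<in> {1..spirals}"
  shows "card (Spiral x) = spiral_length"
proof -
  have "inj_on (spiral x) {..<spiral_length}"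
    using spiral_inject[OF assms assms] by (intro inj_onI) simp
  thus ?thesis unfolding Spiral_def by (simp add: card_image)
qed

lemma Spiral_disjoint:
  assumes "x \<in> {1..spirals}" "x' \<in> {1..spirals}" "x \<noteq> x'"
  shows "Spiral x \<inter> Spiral x' = {}"
proof -
  have "spiral x u \<noteq> spiral x' u'" if "u < spiral_length" "u' < spiral_length" for u u'
    using spiral_inject[OF assms(1,2) that] assms(3) by blast
  thus ?thesis unfolding Spiral_def by (auto simp: eq_commute)
qed

lemma Spiral_subset: "x \<in> {1..spirals} \<Longrightarrow> Spiral x \<subseteq> points"
  unfolding Spiral_def using spiral_in_points by auto

lemma rung_in_points: "q < spirals \<Longrightarrow> u < 2 * spirals \<Longrightarrow> rung q u \<in> points"
proof -
  assume q: "q < spirals" and u: "u < 2 * spirals"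
  have "q * spirals + u div 2 < spirals * spirals"
  proof -
    have "u div 2 < spirals" using u by linarith
    moreover have "q * spirals + spirals \<le> spirals * spirals"
      using q by (metis Suc_leI add.commute mult.commute mult_Suc mult_le_mono1)
    ultimately show ?thesis by linarith
  qed
  moreover have "spirals * spirals \<le> 2 * half" unfolding half_eq by simp
  moreover have "u mod 2 < 2 * r" using r_pos by (simp add: less_le_trans[of _ 2])
  ultimately show ?thesis unfolding rung_def points_def by simp
qed

lemma rung_adjacent: "key_adjacent (rung q u) (rung q (Suc u))"
proof -
  have "fst (T 0) = fst (T 1)" using T_column[of 0] r_pos by simp
  thus ?thesis unfolding key_adjacent_def rung_def xkey_def by (cases "even u") (auto elim!: oddE)
qed

lemma Rung_disjoint:
  assumes "q < spirals" "q' < spirals" "q \<noteq> q'"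
  shows "Rung q \<inter> Rung q' = {}"
proof -
  have "rung q u \<noteq> rung q' u'" if "u < 2 * spirals" "u' < 2 * spirals" for u u'
  proof
    assume "rung q u = rung q' u'"
    hence "q * spirals + u div 2 = q' * spirals + u' div 2" unfolding rung_def by simp
    moreover have "u div 2 < spirals" "u' div 2 < spirals" using that by linarith+
    ultimately show False using mixed_radix_eq_iff assms(3) by blast
  qed
  thus ?thesis unfolding Rung_def by (auto simp: eq_commute)
qed

text \<open>Spiral \<open>x\<close> passes through \<open>Rung q\<close> in lap \<open>Suc twist * q\<close>, which is unreflected.\<close>
lemma Spiral_meets_Rung:
  assumes x: "x \<in> {1..spirals}" and q: "q < spirals"
  shows "Spiral x \<inter> Rung q \<noteq> {}"
proof -
  define j where "j = Suc twist * q"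
  have j: "j < laps" using q twist_le_1 unfolding j_def laps_def spirals_def by (cases twist) auto
  have "even (twist * j)" unfolding j_def using twist_le_1 by (cases twist) auto
  hence "level x j = x + q * spirals" unfolding level_def j_def spirals_def
    by (simp add: reflect_even algebra_simps)
  hence "spiral x (j * (2*r)) = rung q (2 * (x - 1))"
    using r_pos x unfolding spiral_def rung_def by (simp add: twists_before_0 reflect_even)
  moreover have "j * (2*r) < spiral_length" using j r_pos unfolding spiral_length_def by simp
  moreover have "2 * (x - 1) < 2 * spirals" using x by auto
  ultimately show ?thesis unfolding Spiral_def Rung_def by blast
qed

section \<open>Lower bound on the grid-width\<close>

definition separated_pairs :: "(nat \<times> nat) set \<Rightarrow> ((nat \<times> nat) \<times> (nat \<times> nat)) set" where
  "separated_pairs S = {(a, b) \<in> points \<times> points.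
     (xrank b = Suc (xrank a) \<or> yrank b = Suc (yrank a)) \<and> (a \<in> S) \<noteq> (b \<in> S)}"

definition spiral_union :: "(nat \<times> nat) set" where
  "spiral_union = (\<Union>x\<in>{1..spirals}. Spiral x)"

lemma finite_separated_pairs: "finite (separated_pairs S)"
  by (rule finite_subset[of _ "points \<times> points"]) (auto simp: separated_pairs_def finite_points)

lemma card_separated_pairs_le:
  assumes "S \<subseteq> points"
  shows "card (separated_pairs S) \<le> 4 * grid_complexity (plot ` S)"
proof -
  have inj: "inj_on xrank points" "inj_on yrank points"
    using bij_betw_xrank bij_betw_yrank unfolding bij_betw_def by auto
  let ?x = "{(a, b) \<in> points \<times> points. xrank b = Suc (xrank a) \<and> (a \<in> S) \<noteq> (b \<in> S)}"
  let ?y = "{(a, b) \<in> points \<times> points. yrank b = Suc (yrank a) \<and> (a \<in> S) \<noteq> (b \<in> S)}"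
  have "separated_pairs S = ?x \<union> ?y" unfolding separated_pairs_def by auto
  hence "card (separated_pairs S) \<le> card ?x + card ?y" by (simp add: card_Un_le)
  also have "\<dots> \<le> 2 * intervalicity (xrank ` S) + 2 * intervalicity (yrank ` S)"
    using card_split_successor_pairs_le[OF finite_points inj(1) assms]
      card_split_successor_pairs_le[OF finite_points inj(2) assms]
    by (rule add_mono)
  finally have "card (separated_pairs S) \<le> 2 * intervalicity (xrank ` S) + 2 * intervalicity (yrank ` S)" .
  moreover have "fst ` plot ` S = xrank ` S" "snd ` plot ` S = yrank ` S"
    unfolding plot_def by (auto simp: image_image)
  ultimately show ?thesis unfolding grid_complexity_def by simp
qed

lemma separated_pair_on_split_path:
  assumes "\<forall>u<L. f u \<in> points" "\<forall>u. Suc u < L \<longrightarrow> key_adjacent (f u) (f (Suc u))"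
    and "f ` {..<L} \<inter> S \<noteq> {}" "f ` {..<L} - S \<noteq> {}"
  shows "\<exists>e\<in>separated_pairs S. fst e \<in> f ` {..<L}"
proof -
  obtain i j where "i < L" "j < L" "f i \<in> S" "f j \<notin> S" using assms(3,4) by blast
  then obtain u where u: "Suc u < L" "(f u \<in> S) \<noteq> (f (Suc u) \<in> S)"
    by (rule exists_crossing_step)
  have p: "f u \<in> points" "f (Suc u) \<in> points" using assms(1) u(1) by auto
  have "key_adjacent (f u) (f (Suc u))" using assms(2) u(1) by blast
  hence "xrank (f (Suc u)) = Suc (xrank (f u)) \<or> yrank (f (Suc u)) = Suc (yrank (f u))"
    using rank_Suc[OF finite_points inj_on_xkey p] rank_Suc[OF finite_points inj_on_ykey p]
    unfolding key_adjacent_def xrank_def yrank_def by blast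
  hence "(f u, f (Suc u)) \<in> separated_pairs S"
    using p u(2) unfolding separated_pairs_def by auto
  thus ?thesis using u(1) by (intro bexI[of _ "(f u, f (Suc u))"]) auto
qed

lemma spirals_le_separated_pairs:
  assumes "card spiral_union < 3 * card (spiral_union \<inter> S)"
    and "3 * card (spiral_union \<inter> S) \<le> 2 * card spiral_union"
  shows "spirals \<le> 3 * card (separated_pairs S)"
proof -
  let ?split = "{x\<in>{1..spirals}. Spiral x \<inter> S \<noteq> {} \<and> Spiral x - S \<noteq> {}}"
  have "card {1..spirals} \<le> 3 * card ?split
      \<or> (\<forall>q\<in>{..<spirals}. Rung q \<inter> S \<noteq> {} \<and> Rung q - S \<noteq> {})"
  proof (rule rows_or_columns_split[OF _ _ _ _ _ spiral_union_def assms])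
    show "\<forall>x\<in>{1..spirals}. finite (Spiral x)" unfolding Spiral_def by simp
  qed (use card_Spiral Spiral_disjoint Spiral_meets_Rung in auto)
  moreover have "card ?split \<le> card (separated_pairs S)"
  proof (rule card_le_card_of_disjoint_hits[OF finite_separated_pairs, where h = fst and R = Spiral])
    show "\<forall>x\<in>?split. \<exists>e\<in>separated_pairs S. fst e \<in> Spiral x"
      using separated_pair_on_split_path[of spiral_length "spiral _"] spiral_in_points spiral_adjacent
      unfolding Spiral_def by auto
  qed (use Spiral_disjoint in auto)
  moreover have "card {..<spirals} \<le> card (separated_pairs S)"
    if "\<forall>q\<in>{..<spirals}. Rung q \<inter> S \<noteq> {} \<and> Rung q - S \<noteq> {}"
  proof (rule card_le_card_of_disjoint_hits[OF finite_separated_pairs, where h = fst and R = Rung])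
    show "\<forall>q\<in>{..<spirals}. \<exists>e\<in>separated_pairs S. fst e \<in> Rung q"
      using that separated_pair_on_split_path[of "2 * spirals" "rung _"] rung_in_points rung_adjacent
      unfolding Rung_def by auto
  qed (use Rung_disjoint in auto)
  ultimately show ?thesis by force
qed

lemma spiral_union_subset: "spiral_union \<subseteq> points"
  unfolding spiral_union_def using Spiral_subset by blast

lemma two_le_card_spiral_union: "2 \<le> card spiral_union"
proof -
  have "1 \<in> {1..spirals}" using s_le_spirals s_pos by simp
  hence "card (Spiral 1) \<le> card spiral_union"
    using spiral_union_subset finite_points unfolding spiral_union_def
    by (intro card_mono) (auto intro: finite_subset)
  moreover have "2 \<le> spiral_length" unfolding spiral_length_def laps_def using r_pos by simp
  ultimately show ?thesis using card_Spiral[OF \<open>1 \<in> {1..spirals}\<close>] by simp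
qed

text \<open>A subtree holding a middle third of the spiral points separates at least \<open>spirals / 3\<close>
  adjacent pairs, and each separated pair ends an interval of a projection of its leaves.\<close>
theorem grid_width_bound:
  assumes "12 * (w + 1) \<le> spirals"
  shows "w < grid_width len perm"
proof (rule grid_width_greaterI)
  show "finite (diagram len perm)" "diagram len perm \<noteq> {}"
    unfolding diagram_perm using finite_points zero_one_in_points by auto
next
  fix T0 assume T0: "is_grid_tree (diagram len perm) T0"
  let ?U = "plot ` spiral_union"
  have leaves: "set (leaves T0) = plot ` points" using T0 unfolding is_grid_tree_def diagram_perm ..
  have inj: "inj_on plot spiral_union" using inj_on_plot spiral_union_subset by (rule inj_on_subset)
  have finU: "finite ?U" using finite_points spiral_union_subset by (auto intro: finite_subset)
  have cardU: "card ?U = card spiral_union" using inj by (rule card_image)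
  have "?U \<subseteq> set (leaves T0)" unfolding leaves using spiral_union_subset by blast
  hence root: "card ?U < 3 * card (set (leaves T0) \<inter> ?U)"
    using two_le_card_spiral_union cardU by (simp add: Int_absorb1)
  have "3 \<le> 2 * card ?U" using two_le_card_spiral_union cardU by linarith
  then obtain T' where T': "card ?U < 3 * card (set (leaves T') \<inter> ?U)"
    "3 * card (set (leaves T') \<inter> ?U) \<le> 2 * card ?U"
    "grid_complexity (set (leaves T')) \<le> tree_grid_width T0" "set (leaves T') \<subseteq> set (leaves T0)"
    using root by (rule balanced_subtree[OF finU])
  define S where "S = {p\<in>points. plot p \<in> set (leaves T')}"
  have S: "S \<subseteq> points" "plot ` S = set (leaves T')" using T'(4) unfolding S_def leaves by auto
  have "set (leaves T') \<inter> ?U = plot ` (spiral_union \<inter> S)"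
    using spiral_union_subset unfolding S_def by auto
  hence "card (set (leaves T') \<inter> ?U) = card (spiral_union \<inter> S)"
    using inj by (simp add: card_image inj_on_Int)
  hence "spirals \<le> 3 * card (separated_pairs S)"
    using T'(1,2) cardU by (intro spirals_le_separated_pairs) simp_all
  also have "\<dots> \<le> 12 * grid_complexity (plot ` S)" using card_separated_pairs_le[OF S(1)] by simp
  also have "\<dots> \<le> 12 * tree_grid_width T0" using T'(3) S(2) by simp
  finally show "w < tree_grid_width T0" using assms by simp
qed

end

theorem mainTheorem6:
  fixes k l :: nat and M :: "nat \<Rightarrow> nat \<Rightarrow> cell"
  assumes "cg_has_cycle k l M"
  shows "\<forall>w::nat. \<exists>n \<pi>. n \<ge> 1 \<and> in_Grid k l M n \<pi> \<and> grid_width n \<pi> > w"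
proof
  fix w :: nat
  obtain cs where "3 \<le> length cs" "distinct cs"
    "\<forall>t<length cs. cg_adj k l M (cs ! t) (cyc_next cs t)"
    using assms unfolding cg_has_cycle_def cyc_next_def by auto
  hence "turning_cycle k l M cs" by (rule turning_cycle_of_cg_cycle)
  then obtain r T where "turn_cycle k l M r T" using ex_turn_cycle_of_turning_cycle by blast
  then interpret spiral_grid k l M r T "12 * (w + 1)" by unfold_locales auto
  have "w < grid_width len perm" using grid_width_bound s_le_spirals by blast
  thus "\<exists>n \<pi>. n \<ge> 1 \<and> in_Grid k l M n \<pi> \<and> grid_width n \<pi> > w"
    using len_pos in_Grid_perm by blast
qed

end
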